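(* Let $G=(V\cup C,E)$ be a protograph satisfying: every variable node has degree at least $2$; the degree-2 subgraph $G_2$ contains no cycle; every degree-2 variable node is joined by a path in $G$ to a variable node of degree at least $3$. Let $0\le\epsilon<\epsilon_{\mathrm{th}}$. Let $(G'_N)$ be a sequence of lifted graphs $G(T,\Pi)$ of $G$ with blocklength $N=T|V|\to\infty$ and girth $g_N\ge c\log N$ for a constant $c>0$. Consider the standard message-passing (belief-propagation) erasure decoder on the code with Tanner graph $G'_N$ over BEC$(\epsilon)$, run for $t_N$ iterations, where $t_N$ are integers with $4t_N<g_N$ and $t_N\ge c'\log N$ for some constant $c'>0$. Let $P_B(N)$ be the probability that at least one bit remains erased after decoding. Then there are constants $\beta,\gamma>0$ with $P_B(N)=O\bigl(N\exp(-\beta N^{\gamma})\bigr)$; in particular $N^kP_B(N)\to0$ for every $k>0$.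
   Context: A protograph is a finite bipartite multigraph $G=(V\cup C,E)$ with variable nodes $V$, check nodes $C$, and ordered edges $E=\{e_1,\dots,e_{|E|}\}$; parallel edges are allowed. $v(e),c(e)$ denote the variable and check endpoints of $e$; degrees count multiplicity. For an edge $e$, $E_c(e)=\{i: c(e_i)=c(e),\ e_i\neq e\}$ and $E_v(e)=\{i: v(e_i)=v(e),\ e_i\ne e\}$. The degree-2 subgraph $G_2$ consists of all degree-2 variable nodes, all edges incident to them, and the check nodes incident to those edges; a cycle in $G_2$ may have length $2$. Lifted graph: for $T\ge1$ and permutations $\Pi=\{\pi_e:e\in E\}$ of $\{1,\dots,T\}$, $G(T,\Pi)$ has variable nodes $(v,t)$, check nodes $(c,t)$, and for each edge $e$ and each $t$ an edge joining $(v(e),t)$ and $(c(e),\pi_e(t))$; it is the Tanner graph of a binary linear code of blocklength $T|V|$. In the erasure decoder, a check sends an erasure to a neighbouring bit iff some other incoming bit message is an erasure; a bit sends an erasure to a check iff its channel value and all incoming messages from its other checks are erasures; after $t$ iterations a bit is erased iff its channel value and all its incoming check messages are erasures. BEC density evolution: $x_0(i)=\epsilon$, $y_{t+1}(j)=1-\prod_{i\in E_c(e_j)}(1-x_t(i))$, $x_{t+1}(i)=\epsilon\prod_{j\in E_v(e_i)}y_{t+1}(j)$ (empty products equal 1), and $\epsilon_{\mathrm{th}}=\sup\{\epsilon:\max_ix_t(i)\to0\}$. Girth is the length of the shortest cycle. *)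

theory Defs
  imports Complex_Main "HOL-Library.Extended_Real" "HOL-Library.Landau_Symbols"
begin

text \<open>A protograph with variable nodes 0..<nV, check nodes 0..<nC and the ordered
  edge list E; edge i joins variable node fst (E!i) and check node snd (E!i).
  Parallel edges are allowed (repeated entries).\<close>

definition protograph :: "nat \<Rightarrow> nat \<Rightarrow> (nat \<times> nat) list \<Rightarrow> bool" where
  "protograph nV nC E \<longleftrightarrow> (\<forall>e\<in>set E. fst e < nV \<and> snd e < nC)"

definition vdeg :: "(nat \<times> nat) list \<Rightarrow> nat \<Rightarrow> nat" where
  "vdeg E v = length (filter (\<lambda>e. fst e = v) E)"

text \<open>Length-2 cycles (parallel edges) are included.\<close>

definition is_cycle :: "'e set \<Rightarrow> ('e \<Rightarrow> 'v \<times> 'v) \<Rightarrow> 'e list \<Rightarrow> 'v list \<Rightarrow> bool" where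
  "is_cycle Ed ends es vs \<longleftrightarrow>
     length es = length vs \<and> length es \<ge> 1 \<and> distinct es \<and> distinct vs \<and> set es \<subseteq> Ed \<and>
     (\<forall>j<length es. ends (es!j) = (vs!j, vs!((j+1) mod length es)) \<or>
                    ends (es!j) = (vs!((j+1) mod length es), vs!j))"

definition girth :: "'e set \<Rightarrow> ('e \<Rightarrow> 'v \<times> 'v) \<Rightarrow> enat" where
  "girth Ed ends = Inf {enat (length es) | es vs. is_cycle Ed ends es vs}"

text \<open>Protograph vertices: Inl v (variable), Inr c (check).\<close>

definition proto_ends :: "(nat \<times> nat) list \<Rightarrow> nat \<Rightarrow> (nat + nat) \<times> (nat + nat)" where
  "proto_ends E i = (Inl (fst (E!i)), Inr (snd (E!i)))"

text \<open>G_2 contains no cycle: no cycle using only edges incident to degree-2 variable nodes.\<close>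

definition deg2_acyclic :: "(nat \<times> nat) list \<Rightarrow> bool" where
  "deg2_acyclic E \<longleftrightarrow>
     \<not> (\<exists>es vs. is_cycle {i. i < length E \<and> vdeg E (fst (E!i)) = 2} (proto_ends E) es vs)"

definition proto_adj :: "(nat \<times> nat) list \<Rightarrow> ((nat + nat) \<times> (nat + nat)) set" where
  "proto_adj E = {(Inl (fst e), Inr (snd e)) | e. e \<in> set E} \<union>
                 {(Inr (snd e), Inl (fst e)) | e. e \<in> set E}"

text \<open>Lifted edges are pairs (i,t), i < |E|, t < T (copies indexed 0..<T); edge (i,t) joins
  variable node (v(e_i),t) and check node (c(e_i), pi i t).\<close>

definition lift_edges :: "(nat \<times> nat) list \<Rightarrow> nat \<Rightarrow> (nat \<times> nat) set" where
  "lift_edges E T = {(i, t). i < length E \<and> t < T}"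

definition lift_v :: "(nat \<times> nat) list \<Rightarrow> nat \<times> nat \<Rightarrow> nat \<times> nat" where
  "lift_v E e = (fst (E ! fst e), snd e)"

definition lift_c :: "(nat \<times> nat) list \<Rightarrow> (nat \<Rightarrow> nat \<Rightarrow> nat) \<Rightarrow> nat \<times> nat \<Rightarrow> nat \<times> nat" where
  "lift_c E \<pi> e = (snd (E ! fst e), \<pi> (fst e) (snd e))"

definition lift_ends ::
  "(nat \<times> nat) list \<Rightarrow> (nat \<Rightarrow> nat \<Rightarrow> nat) \<Rightarrow> nat \<times> nat \<Rightarrow> ((nat \<times> nat) + (nat \<times> nat)) \<times> ((nat \<times> nat) + (nat \<times> nat))" where
  "lift_ends E \<pi> e = (Inl (lift_v E e), Inr (lift_c E \<pi> e))"

definition lift_girth :: "(nat \<times> nat) list \<Rightarrow> nat \<Rightarrow> (nat \<Rightarrow> nat \<Rightarrow> nat) \<Rightarrow> enat" where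
  "lift_girth E T \<pi> = girth (lift_edges E T) (lift_ends E \<pi>)"

definition valid_lift :: "(nat \<times> nat) list \<Rightarrow> nat \<Rightarrow> (nat \<Rightarrow> nat \<Rightarrow> nat) \<Rightarrow> bool" where
  "valid_lift E T \<pi> \<longleftrightarrow> T \<ge> 1 \<and> (\<forall>i<length E. bij_betw (\<pi> i) {..<T} {..<T})"

text \<open>S = set of variable nodes (bits) erased by the channel. bmsg s e: the bit-to-check
  message on edge e in iteration s is an erasure (iteration 0: channel value).\<close>

definition lEc :: "(nat \<times> nat) list \<Rightarrow> nat \<Rightarrow> (nat \<Rightarrow> nat \<Rightarrow> nat) \<Rightarrow> nat \<times> nat \<Rightarrow> (nat \<times> nat) set" where
  "lEc E T \<pi> e = {e'\<in>lift_edges E T. lift_c E \<pi> e' = lift_c E \<pi> e \<and> e' \<noteq> e}"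

definition lEv :: "(nat \<times> nat) list \<Rightarrow> nat \<Rightarrow> nat \<times> nat \<Rightarrow> (nat \<times> nat) set" where
  "lEv E T e = {e'\<in>lift_edges E T. lift_v E e' = lift_v E e \<and> e' \<noteq> e}"

primrec bmsg :: "(nat \<times> nat) list \<Rightarrow> nat \<Rightarrow> (nat \<Rightarrow> nat \<Rightarrow> nat) \<Rightarrow> (nat \<times> nat) set \<Rightarrow>
                 nat \<Rightarrow> nat \<times> nat \<Rightarrow> bool" where
  "bmsg E T \<pi> S 0 e = (lift_v E e \<in> S)"
| "bmsg E T \<pi> S (Suc s) e = (lift_v E e \<in> S \<and>
      (\<forall>e'\<in>lEv E T e. \<exists>e''\<in>lEc E T \<pi> e'. bmsg E T \<pi> S s e''))"

text \<open>Check-to-bit message on e in iteration s+1 is an erasure.\<close>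

definition cmsg :: "(nat \<times> nat) list \<Rightarrow> nat \<Rightarrow> (nat \<Rightarrow> nat \<Rightarrow> nat) \<Rightarrow> (nat \<times> nat) set \<Rightarrow>
                 nat \<Rightarrow> nat \<times> nat \<Rightarrow> bool" where
  "cmsg E T \<pi> S s e = (\<exists>e'\<in>lEc E T \<pi> e. bmsg E T \<pi> S s e')"

text \<open>Bit b is erased after t iterations (for t = 0 only the channel value counts).\<close>

definition bit_erased :: "(nat \<times> nat) list \<Rightarrow> nat \<Rightarrow> (nat \<Rightarrow> nat \<Rightarrow> nat) \<Rightarrow> (nat \<times> nat) set \<Rightarrow>
                 nat \<Rightarrow> nat \<times> nat \<Rightarrow> bool" where
  "bit_erased E T \<pi> S t b = (b \<in> S \<and>
     (t = 0 \<or> (\<forall>e\<in>lift_edges E T. lift_v E e = b \<longrightarrow> cmsg E T \<pi> S (t - 1) e)))"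

definition lift_bits :: "nat \<Rightarrow> nat \<Rightarrow> (nat \<times> nat) set" where
  "lift_bits nV T = {(v, t). v < nV \<and> t < T}"

definition block_erasure_prob :: "nat \<Rightarrow> (nat \<times> nat) list \<Rightarrow> nat \<Rightarrow> (nat \<Rightarrow> nat \<Rightarrow> nat) \<Rightarrow>
                 real \<Rightarrow> nat \<Rightarrow> real" where
  "block_erasure_prob nV E T \<pi> \<epsilon> t =
     (\<Sum>S\<in>Pow (lift_bits nV T).
        \<epsilon> ^ card S * (1 - \<epsilon>) ^ (card (lift_bits nV T) - card S) *
        (if \<exists>b\<in>lift_bits nV T. bit_erased E T \<pi> S t b then 1 else 0))"

definition pEc :: "(nat \<times> nat) list \<Rightarrow> nat \<Rightarrow> nat set" where
  "pEc E j = {i. i < length E \<and> snd (E!i) = snd (E!j) \<and> i \<noteq> j}"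

definition pEv :: "(nat \<times> nat) list \<Rightarrow> nat \<Rightarrow> nat set" where
  "pEv E j = {i. i < length E \<and> fst (E!i) = fst (E!j) \<and> i \<noteq> j}"

primrec de_x :: "(nat \<times> nat) list \<Rightarrow> real \<Rightarrow> nat \<Rightarrow> nat \<Rightarrow> real" where
  "de_x E \<epsilon> 0 i = \<epsilon>"
| "de_x E \<epsilon> (Suc t) i =
     \<epsilon> * (\<Prod>j\<in>pEv E i. 1 - (\<Prod>k\<in>pEc E j. 1 - de_x E \<epsilon> t k))"

definition de_threshold :: "(nat \<times> nat) list \<Rightarrow> real" where
  "de_threshold E = Sup {\<epsilon> \<in> {0..1}. (\<lambda>t. Max (de_x E \<epsilon> t ` {..<length E})) \<longlonglongrightarrow> 0}"

end

theory Submission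
  imports Defs "HOL-Real_Asymp.Real_Asymp"
begin

text \<open>Below girth 4t the depth-t computation graph of every message in the lifted graph is a tree,
  so the channel erasures it sees are independent and its erasure probability is exactly the
  density evolution value x_t; a union bound gives P_B \<le> N max_i x_t(i). Below the threshold
  x_t \<rightarrow> 0. Since G_2 is acyclic, every chain of degree-2 variable nodes reaches, after boundedly
  many iterations, a variable node of degree at least 3, where two small incoming messages are
  multiplied; hence max x_{t+L} \<le> K (max x_t)^2, which forces the doubly exponential decay
  exp (-\<alpha> 2^{t/L}). With t_N \<ge> c' log N this is exp (-\<alpha> N^\<gamma>).\<close>

section \<open>Walks and girth\<close>

definition walk :: "'e set \<Rightarrow> ('e \<Rightarrow> 'v \<times> 'v) \<Rightarrow> nat \<Rightarrow> (nat \<Rightarrow> 'e) \<Rightarrow> (nat \<Rightarrow> 'v) \<Rightarrow> bool" where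
  "walk Ed ends k ee ve \<longleftrightarrow> (\<forall>j<k. ee j \<in> Ed \<and>
      (ends (ee j) = (ve j, ve (Suc j)) \<or> ends (ee j) = (ve (Suc j), ve j)))"

definition non_backtracking :: "nat \<Rightarrow> (nat \<Rightarrow> 'e) \<Rightarrow> bool" where
  "non_backtracking k ee \<longleftrightarrow> (\<forall>j. Suc j < k \<longrightarrow> ee j \<noteq> ee (Suc j))"

definition loopless :: "'e set \<Rightarrow> ('e \<Rightarrow> 'v \<times> 'v) \<Rightarrow> bool" where
  "loopless Ed ends \<longleftrightarrow> (\<forall>e\<in>Ed. fst (ends e) \<noteq> snd (ends e))"

lemma walk_shift:
  assumes "walk Ed ends k ee ve" "i + d \<le> k"
  shows "walk Ed ends d (\<lambda>m. ee (i + m)) (\<lambda>m. ve (i + m))"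
  using assms by (auto simp: walk_def)

lemma non_backtracking_shift:
  assumes "non_backtracking k ee" "i + d \<le> k"
  shows "non_backtracking d (\<lambda>m. ee (i + m))"
  using assms by (auto simp: non_backtracking_def)

lemma walk_Cons:
  assumes "walk Ed ends k ee ve" "e \<in> Ed" "ends e = (v, ve 0) \<or> ends e = (ve 0, v)"
  shows "walk Ed ends (Suc k) (case_nat e ee) (case_nat v ve)"
  using assms unfolding walk_def by (auto split: nat.split)

lemma non_backtracking_Cons:
  assumes "non_backtracking k ee" "0 < k \<longrightarrow> e \<noteq> ee 0"
  shows "non_backtracking (Suc k) (case_nat e ee)"
  using assms unfolding non_backtracking_def by (auto split: nat.split)

lemma walk_edge_eq_imp_vertex:
  assumes "walk Ed ends k ee ve" "loopless Ed ends" "a < k" "b < k" "ee a = ee b"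
  shows "ve b = ve a \<or> ve b = ve (Suc a)"
  using assms unfolding walk_def loopless_def by (metis fst_conv snd_conv)

lemma simple_closed_walk_is_cycle:
  assumes w: "walk Ed ends d ee ve" and nb: "non_backtracking d ee"
    and ll: "loopless Ed ends" and closed: "ve d = ve 0" and d: "1 \<le> d"
    and inj: "inj_on ve {..<d}"
  shows "is_cycle Ed ends (map ee [0..<d]) (map ve [0..<d])"
proof -
  have vdist: "a = b" if "a < d" "b < d" "ve a = ve b" for a b
    using inj that by (auto dest: inj_onD)
  have "inj_on ee {..<d}"
  proof (rule inj_onI)
    have "a = b" if ab: "a < b" "b < d" and e: "ee a = ee b" for a b
    proof -
      consider "ve b = ve a" | "ve b = ve (Suc a)"
        using walk_edge_eq_imp_vertex[OF w ll _ ab(2) e] ab by force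
      then show ?thesis
      proof cases
        case 1 then show ?thesis using vdist ab by simp
      next
        case 2
        have "Suc a \<noteq> b" using nb e ab unfolding non_backtracking_def by auto
        then show ?thesis using vdist[of "Suc a" b] 2 ab by simp
      qed
    qed
    then show "ee a = ee b \<Longrightarrow> a = b" if "a \<in> {..<d}" "b \<in> {..<d}" for a b
      using that by (metis lessThan_iff linorder_neqE_nat)
  qed
  moreover have "ve ((Suc m) mod d) = ve (Suc m)" if "m < d" for m
    using that closed by (cases "Suc m = d") auto
  ultimately show ?thesis
    using w d inj unfolding is_cycle_def walk_def by (auto simp: distinct_map atLeast0LessThan)
qed

lemma girth_le_cycle_length:
  "is_cycle Ed ends es vs \<Longrightarrow> girth Ed ends \<le> enat (length es)"
  unfolding girth_def by (auto intro!: Inf_lower)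

lemma closed_walk_girth_le:
  assumes "walk Ed ends k ee ve" "non_backtracking k ee" "loopless Ed ends"
    and "ve k = ve 0" "1 \<le> k"
  shows "girth Ed ends \<le> enat k"
  using assms
proof (induction k arbitrary: ee ve rule: less_induct)
  case (less k)
  show ?case
  proof (cases "inj_on ve {..<k}")
    case True
    then show ?thesis
      using girth_le_cycle_length[OF simple_closed_walk_is_cycle[OF less.prems(1-3,4,5)]] by simp
  next
    case False
    then obtain a b where ab: "a < b" "b < k" "ve a = ve b"
      unfolding inj_on_def by (metis lessThan_iff linorder_neqE_nat)
    have "girth Ed ends \<le> enat (b - a)"
      using less.IH[of "b - a" "\<lambda>m. ee (a + m)" "\<lambda>m. ve (a + m)"] ab less.prems
        walk_shift[OF less.prems(1), of a "b - a"]
        non_backtracking_shift[OF less.prems(2), of a "b - a"] by auto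
    then show ?thesis using ab by (meson diff_le_self enat_ord_simps(1) le_trans less_imp_le_nat order_trans)
  qed
qed

lemma walk_rev:
  assumes "walk Ed ends k ee ve"
  shows "walk Ed ends k (\<lambda>m. ee (k - Suc m)) (\<lambda>m. ve (k - m))"
  unfolding walk_def
proof (intro allI impI)
  fix m assume "m < k"
  then have "k - Suc m < k" "Suc (k - Suc m) = k - m" by auto
  then show "ee (k - Suc m) \<in> Ed \<and> (ends (ee (k - Suc m)) = (ve (k - m), ve (k - Suc m)) \<or>
      ends (ee (k - Suc m)) = (ve (k - Suc m), ve (k - m)))"
    using assms unfolding walk_def by metis
qed

lemma non_backtracking_rev:
  assumes "non_backtracking k ee"
  shows "non_backtracking k (\<lambda>m. ee (k - Suc m))"
  unfolding non_backtracking_def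
proof (intro allI impI)
  fix m assume "Suc m < k"
  then have "Suc (k - Suc (Suc m)) < k" "Suc (k - Suc (Suc m)) = k - Suc m" by auto
  then show "ee (k - Suc m) \<noteq> ee (k - Suc (Suc m))"
    using assms unfolding non_backtracking_def by metis
qed

lemma walk_append:
  assumes "walk Ed ends k1 ee1 ve1" "walk Ed ends k2 ee2 ve2" "ve1 k1 = ve2 0"
  shows "walk Ed ends (k1 + k2) (\<lambda>m. if m < k1 then ee1 m else ee2 (m - k1))
           (\<lambda>m. if m \<le> k1 then ve1 m else ve2 (m - k1))"
  using assms unfolding walk_def
  by (auto simp: Suc_diff_le not_less_eq_eq le_Suc_eq less_diff_conv2 dest: spec[of _ "_ - k1"])

lemma non_backtracking_append:
  assumes "non_backtracking k1 ee1" "non_backtracking k2 ee2"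
    and "0 < k1 \<Longrightarrow> 0 < k2 \<Longrightarrow> ee1 (k1 - 1) \<noteq> ee2 0"
  shows "non_backtracking (k1 + k2) (\<lambda>m. if m < k1 then ee1 m else ee2 (m - k1))"
  unfolding non_backtracking_def
proof (intro allI impI)
  fix m assume m: "Suc m < k1 + k2"
  consider "Suc m < k1" | "Suc m = k1" | "k1 \<le> m" by linarith
  then show "(if m < k1 then ee1 m else ee2 (m - k1)) \<noteq>
             (if Suc m < k1 then ee1 (Suc m) else ee2 (Suc m - k1))"
  proof cases
    case 1 then show ?thesis using assms(1) unfolding non_backtracking_def by auto
  next
    case 2 then show ?thesis using assms(3) m by auto
  next
    case 3 then show ?thesis using assms(2) m unfolding non_backtracking_def
      by (auto simp: Suc_diff_le)
  qed
qed

lemma walks_agree_vertices: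
  assumes "walk Ed ends k1 ee1 ve1" "walk Ed ends k2 ee2 ve2" "loopless Ed ends"
    and "ve1 0 = ve2 0" and "\<And>i. i < j \<Longrightarrow> ee1 i = ee2 i" and "j \<le> k1" "j \<le> k2"
  shows "ve1 j = ve2 j"
  using assms(5-)
proof (induction j)
  case 0 then show ?case using assms(4) by simp
next
  case (Suc j)
  then have "ve1 j = ve2 j" "ee1 j = ee2 j" by auto
  moreover have "j < k1" "j < k2" using Suc.prems by auto
  ultimately show ?case
    using assms(1-3) unfolding walk_def loopless_def by (metis fst_conv snd_conv)
qed

text \<open>The cycle: reverse the first walk back to the vertex where the two walks diverge, then follow
  the second one.\<close>

lemma two_walks_girth_le:
  assumes w1: "walk Ed ends k1 ee1 ve1" and w2: "walk Ed ends k2 ee2 ve2"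
    and nb1: "non_backtracking k1 ee1" and nb2: "non_backtracking k2 ee2" and ll: "loopless Ed ends"
    and start: "ve1 0 = ve2 0" and stop: "ve1 k1 = ve2 k2"
    and differ: "j0 < k1" "j0 < k2" "ee1 j0 \<noteq> ee2 j0"
  shows "girth Ed ends \<le> enat (k1 + k2)"
proof -
  define j where "j = (LEAST j. j < k1 \<and> j < k2 \<and> ee1 j \<noteq> ee2 j)"
  have j: "j < k1" "j < k2" "ee1 j \<noteq> ee2 j"
    using LeastI[of "\<lambda>j. j < k1 \<and> j < k2 \<and> ee1 j \<noteq> ee2 j" j0] differ unfolding j_def by auto
  have "ee1 i = ee2 i" if "i < j" for i
    using not_less_Least[of i "\<lambda>j. j < k1 \<and> j < k2 \<and> ee1 j \<noteq> ee2 j"] that j unfolding j_def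
    by auto
  then have vj: "ve1 j = ve2 j" using walks_agree_vertices[OF w1 w2 ll start] j by auto
  define a where "a = k1 - j"
  define b where "b = k2 - j"
  let ?ee1 = "\<lambda>m. ee1 (j + (a - Suc m))" and ?ve1 = "\<lambda>m. ve1 (j + (a - m))"
  let ?ee2 = "\<lambda>m. ee2 (j + m)" and ?ve2 = "\<lambda>m. ve2 (j + m)"
  have "j + a \<le> k1" "j + b \<le> k2" using j by (auto simp: a_def b_def)
  note shifted = walk_shift[OF w1 \<open>j + a \<le> k1\<close>] walk_shift[OF w2 \<open>j + b \<le> k2\<close>]
    non_backtracking_shift[OF nb1 \<open>j + a \<le> k1\<close>] non_backtracking_shift[OF nb2 \<open>j + b \<le> k2\<close>]
  have wa: "walk Ed ends a ?ee1 ?ve1" using walk_rev[OF shifted(1)] by simp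
  have "ve1 (j + a) = ve2 (j + b)" using stop j by (simp add: a_def b_def)
  then have "girth Ed ends \<le> enat (a + b)"
  proof (intro closed_walk_girth_le[OF walk_append[OF wa shifted(2)] non_backtracking_append ll])
    show "non_backtracking a ?ee1" using non_backtracking_rev[OF shifted(3)] by simp
    show "non_backtracking b ?ee2" using shifted(4) .
  qed (use j vj in \<open>auto simp: a_def b_def\<close>)
  also have "a + b \<le> k1 + k2" by (simp add: a_def b_def)
  finally show ?thesis by simp
qed

section \<open>Independent erasures\<close>

definition bernoulli_weight :: "real \<Rightarrow> 'a set \<Rightarrow> 'a set \<Rightarrow> real" where
  "bernoulli_weight \<epsilon> B S = \<epsilon> ^ card S * (1 - \<epsilon>) ^ (card B - card S)"

definition bernoulli_prob :: "real \<Rightarrow> 'a set \<Rightarrow> ('a set \<Rightarrow> bool) \<Rightarrow> real" where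
  "bernoulli_prob \<epsilon> B Q = (\<Sum>S\<in>Pow B. bernoulli_weight \<epsilon> B S * (if Q S then 1 else 0))"

definition depends_on :: "('a set \<Rightarrow> bool) \<Rightarrow> 'a set \<Rightarrow> bool" where
  "depends_on Q A \<longleftrightarrow> (\<forall>S. Q S = Q (S \<inter> A))"

lemma depends_on_mono: "depends_on Q A \<Longrightarrow> A \<subseteq> A' \<Longrightarrow> depends_on Q A'"
  unfolding depends_on_def by (metis Int_assoc inf.absorb_iff2)

lemma depends_on_Not: "depends_on Q A \<Longrightarrow> depends_on (\<lambda>S. \<not> Q S) A"
  unfolding depends_on_def by blast

lemma depends_on_Ball:
  assumes "\<And>i. i \<in> I \<Longrightarrow> depends_on (Q i) (D i)"
  shows "depends_on (\<lambda>S. \<forall>i\<in>I. Q i S) (\<Union>i\<in>I. D i)"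
proof -
  have "depends_on (Q i) (\<Union>i\<in>I. D i)" if "i \<in> I" for i
    using depends_on_mono[OF assms[OF that]] that by blast
  then show ?thesis unfolding depends_on_def by blast
qed

lemma depends_on_Bex:
  assumes "\<And>i. i \<in> I \<Longrightarrow> depends_on (Q i) (D i)"
  shows "depends_on (\<lambda>S. \<exists>i\<in>I. Q i S) (\<Union>i\<in>I. D i)"
proof -
  have "depends_on (\<lambda>S. \<forall>i\<in>I. \<not> Q i S) (\<Union>i\<in>I. D i)"
    using assms by (intro depends_on_Ball depends_on_Not)
  then show ?thesis using depends_on_Not by fastforce
qed

lemma bij_betw_Un_Pow:
  assumes "A \<inter> C = {}"
  shows "bij_betw (\<lambda>(X, Y). X \<union> Y) (Pow A \<times> Pow C) (Pow (A \<union> C))"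
  by (rule bij_betw_byWitness[where f' = "\<lambda>S. (S \<inter> A, S \<inter> C)"]) (use assms in auto)

lemma bernoulli_weight_Un:
  assumes "finite A" "finite C" "A \<inter> C = {}" "X \<subseteq> A" "Y \<subseteq> C"
  shows "bernoulli_weight \<epsilon> (A \<union> C) (X \<union> Y) = bernoulli_weight \<epsilon> A X * bernoulli_weight \<epsilon> C Y"
proof -
  have "finite X" "finite Y" using assms by (meson finite_subset)+
  then have "card (X \<union> Y) = card X + card Y" using assms by (subst card_Un_disjoint) auto
  moreover have "card (A \<union> C) = card A + card C" using assms by (simp add: card_Un_disjoint)
  moreover have "card X \<le> card A" "card Y \<le> card C" using assms by (simp_all add: card_mono)
  ultimately have "card (A \<union> C) - card (X \<union> Y) = (card A - card X) + (card C - card Y)"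
    by simp
  then show ?thesis
    unfolding bernoulli_weight_def using \<open>card (X \<union> Y) = card X + card Y\<close>
    by (simp add: power_add algebra_simps)
qed

lemma bernoulli_prob_Un_conj:
  assumes "finite A" "finite C" and disj: "A \<inter> C = {}"
    and P: "depends_on P A" and R: "depends_on R C"
  shows "bernoulli_prob \<epsilon> (A \<union> C) (\<lambda>S. P S \<and> R S) = bernoulli_prob \<epsilon> A P * bernoulli_prob \<epsilon> C R"
proof -
  let ?f = "\<lambda>B Q S. bernoulli_weight \<epsilon> B S * (if Q S then 1 else 0)"
  have split: "?f (A \<union> C) (\<lambda>S. P S \<and> R S) (X \<union> Y) = ?f A P X * ?f C R Y"
    if "X \<subseteq> A" "Y \<subseteq> C" for X Y
  proof -
    have "(X \<union> Y) \<inter> A = X" "(X \<union> Y) \<inter> C = Y" using that disj by auto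
    then have "P (X \<union> Y) = P X" "R (X \<union> Y) = R Y"
      using P R unfolding depends_on_def by metis+
    then show ?thesis using bernoulli_weight_Un[OF assms(1-3) that] by simp
  qed
  have "bernoulli_prob \<epsilon> (A \<union> C) (\<lambda>S. P S \<and> R S) =
        (\<Sum>(X, Y)\<in>Pow A \<times> Pow C. ?f (A \<union> C) (\<lambda>S. P S \<and> R S) (X \<union> Y))"
    unfolding bernoulli_prob_def
    using sum.reindex_bij_betw[OF bij_betw_Un_Pow[OF disj], symmetric]
    by (simp add: case_prod_beta')
  also have "\<dots> = (\<Sum>(X, Y)\<in>Pow A \<times> Pow C. ?f A P X * ?f C R Y)"
    by (rule sum.cong) (auto simp: split)
  also have "\<dots> = bernoulli_prob \<epsilon> A P * bernoulli_prob \<epsilon> C R"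
    unfolding bernoulli_prob_def sum_product sum.cartesian_product by (simp add: case_prod_beta')
  finally show ?thesis .
qed

lemma bernoulli_prob_True: "finite B \<Longrightarrow> bernoulli_prob \<epsilon> B (\<lambda>S. True) = 1"
proof (induction B rule: finite_induct)
  case empty then show ?case by (simp add: bernoulli_prob_def bernoulli_weight_def)
next
  case (insert x B)
  have "Pow {x} = {{}, {x}}" by auto
  then have "bernoulli_prob \<epsilon> {x} (\<lambda>S. True) = 1"
    by (simp add: bernoulli_prob_def bernoulli_weight_def)
  moreover have "bernoulli_prob \<epsilon> ({x} \<union> B) (\<lambda>S. True \<and> True) =
                 bernoulli_prob \<epsilon> {x} (\<lambda>S. True) * bernoulli_prob \<epsilon> B (\<lambda>S. True)"
    by (rule bernoulli_prob_Un_conj) (use insert in \<open>auto simp: depends_on_def\<close>)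
  ultimately show ?case using insert by simp
qed

lemma bernoulli_prob_restrict:
  assumes "finite B" "A \<subseteq> B" "depends_on P A"
  shows "bernoulli_prob \<epsilon> B P = bernoulli_prob \<epsilon> A P"
proof -
  have "bernoulli_prob \<epsilon> (A \<union> (B - A)) (\<lambda>S. P S \<and> True) =
        bernoulli_prob \<epsilon> A P * bernoulli_prob \<epsilon> (B - A) (\<lambda>S. True)"
    by (rule bernoulli_prob_Un_conj) (use assms finite_subset in \<open>auto simp: depends_on_def\<close>)
  moreover have "A \<union> (B - A) = B" using assms by auto
  ultimately show ?thesis using bernoulli_prob_True[of "B - A" \<epsilon>] assms by simp
qed

lemma bernoulli_prob_conj_indep:
  assumes "finite B" "A \<subseteq> B" "C \<subseteq> B" "A \<inter> C = {}" "depends_on P A" "depends_on R C"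
  shows "bernoulli_prob \<epsilon> B (\<lambda>S. P S \<and> R S) = bernoulli_prob \<epsilon> B P * bernoulli_prob \<epsilon> B R"
proof -
  have "depends_on (\<lambda>S. P S \<and> R S) (A \<union> C)"
    using depends_on_mono[OF assms(5), of "A \<union> C"] depends_on_mono[OF assms(6), of "A \<union> C"]
    unfolding depends_on_def by blast
  then have "bernoulli_prob \<epsilon> B (\<lambda>S. P S \<and> R S) = bernoulli_prob \<epsilon> (A \<union> C) (\<lambda>S. P S \<and> R S)"
    using assms by (intro bernoulli_prob_restrict) auto
  also have "\<dots> = bernoulli_prob \<epsilon> A P * bernoulli_prob \<epsilon> C R"
    using assms finite_subset by (intro bernoulli_prob_Un_conj) auto
  finally show ?thesis using assms bernoulli_prob_restrict by metis
qed

lemma bernoulli_prob_Not: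
  "finite B \<Longrightarrow> bernoulli_prob \<epsilon> B (\<lambda>S. \<not> P S) = 1 - bernoulli_prob \<epsilon> B P"
proof -
  assume "finite B"
  have "bernoulli_prob \<epsilon> B (\<lambda>S. \<not> P S) + bernoulli_prob \<epsilon> B P = bernoulli_prob \<epsilon> B (\<lambda>S. True)"
    unfolding bernoulli_prob_def sum.distrib[symmetric] by (rule sum.cong) auto
  then show ?thesis using bernoulli_prob_True[OF \<open>finite B\<close>] by simp
qed

lemma bernoulli_prob_Ball_indep:
  assumes "finite B" "finite I"
    and "\<And>i. i \<in> I \<Longrightarrow> D i \<subseteq> B"
    and "\<And>i j. i \<in> I \<Longrightarrow> j \<in> I \<Longrightarrow> i \<noteq> j \<Longrightarrow> D i \<inter> D j = {}"
    and "\<And>i. i \<in> I \<Longrightarrow> depends_on (Q i) (D i)"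
  shows "bernoulli_prob \<epsilon> B (\<lambda>S. \<forall>i\<in>I. Q i S) = (\<Prod>i\<in>I. bernoulli_prob \<epsilon> B (Q i))"
  using assms(2-)
proof (induction I rule: finite_induct)
  case empty then show ?case using bernoulli_prob_True[OF assms(1)] by simp
next
  case (insert i I)
  have "bernoulli_prob \<epsilon> B (\<lambda>S. Q i S \<and> (\<forall>j\<in>I. Q j S)) =
        bernoulli_prob \<epsilon> B (Q i) * bernoulli_prob \<epsilon> B (\<lambda>S. \<forall>j\<in>I. Q j S)"
    using insert.prems insert.hyps
    by (intro bernoulli_prob_conj_indep[OF assms(1), of "D i" "\<Union>j\<in>I. D j"] depends_on_Ball)
       blast+
  then show ?case using insert by simp
qed

lemma bernoulli_prob_Bex_indep:
  assumes "finite B" "finite I"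
    and "\<And>i. i \<in> I \<Longrightarrow> D i \<subseteq> B"
    and "\<And>i j. i \<in> I \<Longrightarrow> j \<in> I \<Longrightarrow> i \<noteq> j \<Longrightarrow> D i \<inter> D j = {}"
    and "\<And>i. i \<in> I \<Longrightarrow> depends_on (Q i) (D i)"
  shows "bernoulli_prob \<epsilon> B (\<lambda>S. \<exists>i\<in>I. Q i S) = 1 - (\<Prod>i\<in>I. 1 - bernoulli_prob \<epsilon> B (Q i))"
proof -
  have "bernoulli_prob \<epsilon> B (\<lambda>S. \<exists>i\<in>I. Q i S) = 1 - bernoulli_prob \<epsilon> B (\<lambda>S. \<forall>i\<in>I. \<not> Q i S)"
    using bernoulli_prob_Not[OF assms(1), where P = "\<lambda>S. \<forall>i\<in>I. \<not> Q i S"] by simp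
  also have "bernoulli_prob \<epsilon> B (\<lambda>S. \<forall>i\<in>I. \<not> Q i S) =
             (\<Prod>i\<in>I. bernoulli_prob \<epsilon> B (\<lambda>S. \<not> Q i S))"
    by (rule bernoulli_prob_Ball_indep[OF assms(1,2), where D = D]) (use assms in \<open>auto intro: depends_on_Not\<close>)
  also have "\<dots> = (\<Prod>i\<in>I. 1 - bernoulli_prob \<epsilon> B (Q i))"
    by (simp add: bernoulli_prob_Not[OF assms(1)])
  finally show ?thesis .
qed

lemma bernoulli_prob_mono:
  assumes "0 \<le> \<epsilon>" "\<epsilon> \<le> 1" "\<And>S. S \<subseteq> B \<Longrightarrow> P S \<Longrightarrow> R S"
  shows "bernoulli_prob \<epsilon> B P \<le> bernoulli_prob \<epsilon> B R"
  unfolding bernoulli_prob_def bernoulli_weight_def using assms by (intro sum_mono) auto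

lemma bernoulli_prob_Bex_le:
  assumes "0 \<le> \<epsilon>" "\<epsilon> \<le> 1" "finite I"
  shows "bernoulli_prob \<epsilon> B (\<lambda>S. \<exists>i\<in>I. Q i S) \<le> (\<Sum>i\<in>I. bernoulli_prob \<epsilon> B (Q i))"
proof -
  have "bernoulli_prob \<epsilon> B (\<lambda>S. \<exists>i\<in>I. Q i S) \<le>
        (\<Sum>S\<in>Pow B. \<Sum>i\<in>I. bernoulli_weight \<epsilon> B S * (if Q i S then 1 else 0))"
    unfolding bernoulli_prob_def
  proof (rule sum_mono)
    fix S
    have "0 \<le> bernoulli_weight \<epsilon> B S" using assms by (simp add: bernoulli_weight_def)
    then show "bernoulli_weight \<epsilon> B S * (if \<exists>i\<in>I. Q i S then 1 else 0) \<le>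
               (\<Sum>i\<in>I. bernoulli_weight \<epsilon> B S * (if Q i S then 1 else 0))"
    proof (cases "\<exists>i\<in>I. Q i S")
      case True
      then obtain i where "i \<in> I" "Q i S" by blast
      then have "bernoulli_weight \<epsilon> B S * (if Q i S then 1 else 0) \<le>
                 (\<Sum>i\<in>I. bernoulli_weight \<epsilon> B S * (if Q i S then 1 else 0))"
        using \<open>0 \<le> bernoulli_weight \<epsilon> B S\<close> assms(3) by (intro member_le_sum) auto
      then show ?thesis using \<open>Q i S\<close> True by simp
    qed (simp add: sum_nonneg \<open>0 \<le> bernoulli_weight \<epsilon> B S\<close>)
  qed
  also have "\<dots> = (\<Sum>i\<in>I. bernoulli_prob \<epsilon> B (Q i))" unfolding bernoulli_prob_def by (rule sum.swap)
  finally show ?thesis .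
qed

lemma bernoulli_prob_mem:
  assumes "finite B" "b \<in> B"
  shows "bernoulli_prob \<epsilon> B (\<lambda>S. b \<in> S) = \<epsilon>"
proof -
  have "bernoulli_prob \<epsilon> B (\<lambda>S. b \<in> S) = bernoulli_prob \<epsilon> {b} (\<lambda>S. b \<in> S)"
    using assms by (intro bernoulli_prob_restrict) (auto simp: depends_on_def)
  also have "Pow {b} = {{}, {b}}" by auto
  then have "bernoulli_prob \<epsilon> {b} (\<lambda>S. b \<in> S) = \<epsilon>"
    by (simp add: bernoulli_prob_def bernoulli_weight_def)
  finally show ?thesis .
qed

section \<open>Local structure of the lifted graph\<close>

lemma finite_lift_edges: "finite (lift_edges E T)"
proof -
  have "lift_edges E T = {..<length E} \<times> {..<T}" by (auto simp: lift_edges_def)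
  then show ?thesis by simp
qed

lemma finite_lift_bits: "finite (lift_bits nV T)"
proof -
  have "lift_bits nV T = {..<nV} \<times> {..<T}" by (auto simp: lift_bits_def)
  then show ?thesis by simp
qed

lemma card_lift_bits: "card (lift_bits nV T) = T * nV"
proof -
  have "lift_bits nV T = {..<nV} \<times> {..<T}" by (auto simp: lift_bits_def)
  then show ?thesis by (simp add: card_cartesian_product)
qed

lemma lEv_subset: "lEv E T e \<subseteq> lift_edges E T" by (auto simp: lEv_def)
lemma lEc_subset: "lEc E T \<pi> e \<subseteq> lift_edges E T" by (auto simp: lEc_def)
lemma finite_lEv: "finite (lEv E T e)" using finite_subset[OF lEv_subset finite_lift_edges] .
lemma finite_lEc: "finite (lEc E T \<pi> e)" using finite_subset[OF lEc_subset finite_lift_edges] .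

lemma lift_v_in_lift_bits:
  "protograph nV nC E \<Longrightarrow> e \<in> lift_edges E T \<Longrightarrow> lift_v E e \<in> lift_bits nV T"
  by (auto simp: protograph_def lift_edges_def lift_v_def lift_bits_def)

lemma loopless_lift: "loopless (lift_edges E T) (lift_ends E \<pi>)"
  by (simp add: loopless_def lift_ends_def)

lemma inj_on_fst_lEv: "inj_on fst (lEv E T e)"
  by (rule inj_onI) (auto simp: lEv_def lift_v_def)

lemma fst_lEv:
  assumes "e \<in> lift_edges E T"
  shows "fst ` lEv E T e = pEv E (fst e)"
proof
  show "fst ` lEv E T e \<subseteq> pEv E (fst e)"
    by (auto simp: lEv_def pEv_def lift_v_def lift_edges_def)
  show "pEv E (fst e) \<subseteq> fst ` lEv E T e"
  proof
    fix j assume "j \<in> pEv E (fst e)"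
    then have "(j, snd e) \<in> lEv E T e" using assms
      by (auto simp: lEv_def pEv_def lift_v_def lift_edges_def)
    then show "j \<in> fst ` lEv E T e" by force
  qed
qed

context
  fixes E :: "(nat \<times> nat) list" and T :: nat and \<pi> :: "nat \<Rightarrow> nat \<Rightarrow> nat"
  assumes lift: "valid_lift E T \<pi>"
begin

lemma lift_perm_bij: "k < length E \<Longrightarrow> bij_betw (\<pi> k) {..<T} {..<T}"
  using lift by (simp add: valid_lift_def)

lemma lift_perm_inj: "k < length E \<Longrightarrow> a < T \<Longrightarrow> b < T \<Longrightarrow> \<pi> k a = \<pi> k b \<Longrightarrow> a = b"
  using lift_perm_bij by (auto simp: bij_betw_def dest: inj_onD)

lemma lift_perm_less: "k < length E \<Longrightarrow> a < T \<Longrightarrow> \<pi> k a < T"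
  using lift_perm_bij bij_betwE by blast

lemma lift_perm_surj: "k < length E \<Longrightarrow> b < T \<Longrightarrow> \<exists>a<T. \<pi> k a = b"
  using lift_perm_bij[THEN bij_betw_imp_surj_on] by (metis imageE lessThan_iff)

lemma inj_on_fst_lEc: "inj_on fst (lEc E T \<pi> e)"
  by (rule inj_onI) (auto simp: lEc_def lift_c_def lift_edges_def dest: lift_perm_inj)

lemma fst_lEc:
  assumes e: "e \<in> lift_edges E T"
  shows "fst ` lEc E T \<pi> e = pEc E (fst e)"
proof
  obtain j t where jt: "e = (j, t)" "j < length E" "t < T" using e by (auto simp: lift_edges_def)
  show "fst ` lEc E T \<pi> e \<subseteq> pEc E (fst e)"
    using jt by (force simp: lEc_def pEc_def lift_c_def lift_edges_def dest: lift_perm_inj)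
  show "pEc E (fst e) \<subseteq> fst ` lEc E T \<pi> e"
  proof
    fix k assume k: "k \<in> pEc E (fst e)"
    then obtain a where "a < T" "\<pi> k a = \<pi> j t"
      using lift_perm_surj[of k "\<pi> j t"] lift_perm_less[OF jt(2,3)] by (auto simp: pEc_def)
    then have "(k, a) \<in> lEc E T \<pi> e" using k jt by (auto simp: lEc_def pEc_def lift_c_def lift_edges_def)
    then show "k \<in> fst ` lEc E T \<pi> e" by force
  qed
qed

end

primrec msg_support :: "(nat \<times> nat) list \<Rightarrow> nat \<Rightarrow> (nat \<Rightarrow> nat \<Rightarrow> nat) \<Rightarrow> nat \<Rightarrow>
    nat \<times> nat \<Rightarrow> (nat \<times> nat) set" where
  "msg_support E T \<pi> 0 e = {lift_v E e}"
| "msg_support E T \<pi> (Suc s) e =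
     insert (lift_v E e) (\<Union>e'\<in>lEv E T e. \<Union>e''\<in>lEc E T \<pi> e'. msg_support E T \<pi> s e'')"

lemma bmsg_depends_on_support: "depends_on (\<lambda>S. bmsg E T \<pi> S s e) (msg_support E T \<pi> s e)"
proof (induction s arbitrary: e)
  case 0
  show ?case by (simp add: depends_on_def)
next
  case (Suc s)
  let ?M = "msg_support E T \<pi> (Suc s) e"
  show ?case unfolding depends_on_def
  proof
    fix S
    have "bmsg E T \<pi> (S \<inter> ?M) s e'' = bmsg E T \<pi> S s e''"
      if "e' \<in> lEv E T e" "e'' \<in> lEc E T \<pi> e'" for e' e''
      using depends_on_mono[OF Suc.IH, of e'' ?M] that unfolding depends_on_def by auto
    then show "bmsg E T \<pi> S (Suc s) e = bmsg E T \<pi> (S \<inter> ?M) (Suc s) e"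
      by (simp cong: ball_cong bex_cong)
  qed
qed

lemma cmsg_depends_on_support:
  "depends_on (\<lambda>S. cmsg E T \<pi> S s e) (\<Union>e''\<in>lEc E T \<pi> e. msg_support E T \<pi> s e'')"
  unfolding cmsg_def by (rule depends_on_Bex) (rule bmsg_depends_on_support)

lemma msg_support_subset_lift_bits:
  "protograph nV nC E \<Longrightarrow> e \<in> lift_edges E T \<Longrightarrow> msg_support E T \<pi> s e \<subseteq> lift_bits nV T"
proof (induction s arbitrary: e)
  case (Suc s)
  have "msg_support E T \<pi> s e'' \<subseteq> lift_bits nV T" if "e'' \<in> lEc E T \<pi> e'" for e' e''
    using Suc.IH[OF Suc.prems(1)] that lEc_subset by blast
  then show ?case using lift_v_in_lift_bits[OF Suc.prems] by simp blast
qed (simp add: lift_v_in_lift_bits)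

lemma walk_through_neighbours:
  assumes e': "e' \<in> lEv E T e" and e'': "e'' \<in> lEc E T \<pi> e'"
    and w: "walk (lift_edges E T) (lift_ends E \<pi>) k ee ve" and nb: "non_backtracking k ee"
    and start: "ve 0 = Inl (lift_v E e'')" and first: "0 < k \<longrightarrow> ee 0 \<noteq> e''"
  shows "walk (lift_edges E T) (lift_ends E \<pi>) (Suc (Suc k)) (case_nat e' (case_nat e'' ee))
           (case_nat (Inl (lift_v E e)) (case_nat (Inr (lift_c E \<pi> e')) ve))"
    and "non_backtracking (Suc (Suc k)) (case_nat e' (case_nat e'' ee))"
proof -
  have e'E: "e' \<in> lift_edges E T" "lift_v E e' = lift_v E e" using e' by (auto simp: lEv_def)
  have e''E: "e'' \<in> lift_edges E T" "lift_c E \<pi> e'' = lift_c E \<pi> e'" "e'' \<noteq> e'"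
    using e'' by (auto simp: lEc_def)
  show "walk (lift_edges E T) (lift_ends E \<pi>) (Suc (Suc k)) (case_nat e' (case_nat e'' ee))
          (case_nat (Inl (lift_v E e)) (case_nat (Inr (lift_c E \<pi> e')) ve))"
    using e'E e''E start by (intro walk_Cons w) (auto simp: lift_ends_def)
  show "non_backtracking (Suc (Suc k)) (case_nat e' (case_nat e'' ee))"
    using e''E first by (intro non_backtracking_Cons nb) auto
qed

lemma msg_support_walk:
  assumes "e \<in> lift_edges E T" "b \<in> msg_support E T \<pi> s e"
  shows "\<exists>k ee ve. k \<le> 2 * s \<and> walk (lift_edges E T) (lift_ends E \<pi>) k ee ve \<and>
           non_backtracking k ee \<and> ve 0 = Inl (lift_v E e) \<and> ve k = Inl b \<and> (0 < k \<longrightarrow> ee 0 \<noteq> e)"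
  using assms
proof (induction s arbitrary: e)
  case 0
  then show ?case by (intro exI[of _ 0] exI[of _ "\<lambda>_. e"] exI[of _ "\<lambda>_. Inl b"])
      (auto simp: walk_def non_backtracking_def)
next
  case (Suc s)
  show ?case
  proof (cases "b = lift_v E e")
    case True
    then show ?thesis by (intro exI[of _ 0] exI[of _ "\<lambda>_. e"] exI[of _ "\<lambda>_. Inl b"])
      (auto simp: walk_def non_backtracking_def)
  next
    case False
    then obtain e' e'' where e': "e' \<in> lEv E T e" and e'': "e'' \<in> lEc E T \<pi> e'"
      and b: "b \<in> msg_support E T \<pi> s e''" using Suc.prems by auto
    have "e'' \<in> lift_edges E T" using e'' lEc_subset by blast
    then obtain k ee ve where k: "k \<le> 2 * s" and w: "walk (lift_edges E T) (lift_ends E \<pi>) k ee ve"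
      and nb: "non_backtracking k ee" and ends: "ve 0 = Inl (lift_v E e'')" "ve k = Inl b"
      and first: "0 < k \<longrightarrow> ee 0 \<noteq> e''"
      using Suc.IH b by blast
    let ?ee = "case_nat e' (case_nat e'' ee)"
      and ?ve = "case_nat (Inl (lift_v E e)) (case_nat (Inr (lift_c E \<pi> e')) ve)"
    note ext = walk_through_neighbours[OF e' e'' w nb ends(1) first]
    show ?thesis
    proof (intro exI conjI)
      show "Suc (Suc k) \<le> 2 * Suc s" using k by simp
      show "walk (lift_edges E T) (lift_ends E \<pi>) (Suc (Suc k)) ?ee ?ve" by (rule ext(1))
      show "non_backtracking (Suc (Suc k)) ?ee" by (rule ext(2))
      show "?ve 0 = Inl (lift_v E e)" by simp
      show "?ve (Suc (Suc k)) = Inl b" using ends(2) by simp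
      show "0 < Suc (Suc k) \<longrightarrow> ?ee 0 \<noteq> e" using e' by (auto simp: lEv_def)
    qed
  qed
qed

lemma girth_le_contradiction:
  assumes "girth Ed ends \<le> enat k" "enat m < girth Ed ends" "k \<le> m"
  shows False
  using assms by (metis enat_ord_simps(1) leD le_less_trans order.trans)

text \<open>Below girth 4(s+1) the computation graph of a message is a tree, so the bit of e is not
  among the bits seen through its neighbours, and distinct branches see disjoint sets of bits.\<close>

lemma lift_v_notin_msg_support:
  assumes girth: "enat (4 * Suc s) < lift_girth E T \<pi>"
    and e': "e' \<in> lEv E T e" and e'': "e'' \<in> lEc E T \<pi> e'"
  shows "lift_v E e \<notin> msg_support E T \<pi> s e''"
proof
  assume "lift_v E e \<in> msg_support E T \<pi> s e''"
  moreover have "e'' \<in> lift_edges E T" using e'' lEc_subset by blast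
  ultimately obtain k ee ve where k: "k \<le> 2 * s" and w: "walk (lift_edges E T) (lift_ends E \<pi>) k ee ve"
    and nb: "non_backtracking k ee" and ends: "ve 0 = Inl (lift_v E e'')" "ve k = Inl (lift_v E e)"
    and first: "0 < k \<longrightarrow> ee 0 \<noteq> e''"
    using msg_support_walk by blast
  note ext = walk_through_neighbours[OF e' e'' w nb ends(1) first]
  have "girth (lift_edges E T) (lift_ends E \<pi>) \<le> enat (Suc (Suc k))"
    by (rule closed_walk_girth_le[OF ext loopless_lift]) (use ends(2) in simp_all)
  then show False using girth k unfolding lift_girth_def by (auto elim: girth_le_contradiction)
qed

lemma msg_supports_disjoint:
  assumes girth: "enat (4 * Suc s) < lift_girth E T \<pi>"
    and e1': "e1' \<in> lEv E T e" and e1'': "e1'' \<in> lEc E T \<pi> e1'"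
    and e2': "e2' \<in> lEv E T e" and e2'': "e2'' \<in> lEc E T \<pi> e2'"
    and ne: "(e1', e1'') \<noteq> (e2', e2'')"
  shows "msg_support E T \<pi> s e1'' \<inter> msg_support E T \<pi> s e2'' = {}"
proof (rule ccontr)
  assume "msg_support E T \<pi> s e1'' \<inter> msg_support E T \<pi> s e2'' \<noteq> {}"
  then obtain b where b: "b \<in> msg_support E T \<pi> s e1''" "b \<in> msg_support E T \<pi> s e2''" by blast
  have "e1'' \<in> lift_edges E T" "e2'' \<in> lift_edges E T" using e1'' e2'' lEc_subset by blast+
  then obtain k1 ee1 ve1 where k1: "k1 \<le> 2 * s"
    and w1: "walk (lift_edges E T) (lift_ends E \<pi>) k1 ee1 ve1" and nb1: "non_backtracking k1 ee1"
    and ends1: "ve1 0 = Inl (lift_v E e1'')" "ve1 k1 = Inl b" and first1: "0 < k1 \<longrightarrow> ee1 0 \<noteq> e1''"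
    using msg_support_walk b(1) by blast
  obtain k2 ee2 ve2 where k2: "k2 \<le> 2 * s"
    and w2: "walk (lift_edges E T) (lift_ends E \<pi>) k2 ee2 ve2" and nb2: "non_backtracking k2 ee2"
    and ends2: "ve2 0 = Inl (lift_v E e2'')" "ve2 k2 = Inl b" and first2: "0 < k2 \<longrightarrow> ee2 0 \<noteq> e2''"
    using msg_support_walk b(2) \<open>e2'' \<in> lift_edges E T\<close> by blast
  note ext1 = walk_through_neighbours[OF e1' e1'' w1 nb1 ends1(1) first1]
  note ext2 = walk_through_neighbours[OF e2' e2'' w2 nb2 ends2(1) first2]
  have "\<exists>j<2. case_nat e1' (case_nat e1'' ee1) j \<noteq> case_nat e2' (case_nat e2'' ee2) j"
  proof (cases "e1' = e2'")
    case True
    then show ?thesis using ne by (intro exI[of _ "Suc 0"]) simp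
  qed (intro exI[of _ 0], simp)
  then obtain j where j: "j < 2" "case_nat e1' (case_nat e1'' ee1) j \<noteq> case_nat e2' (case_nat e2'' ee2) j"
    by blast
  have "girth (lift_edges E T) (lift_ends E \<pi>) \<le> enat (Suc (Suc k1) + Suc (Suc k2))"
    by (rule two_walks_girth_le[OF ext1(1) ext2(1) ext1(2) ext2(2) loopless_lift _ _ _ _ j(2)])
      (use j(1) ends1(2) ends2(2) in simp_all)
  then show False using girth k1 k2 unfolding lift_girth_def by (auto elim: girth_le_contradiction)
qed

lemma prod_lEv_reindex:
  "e \<in> lift_edges E T \<Longrightarrow> (\<Prod>e'\<in>lEv E T e. f (fst e')) = (\<Prod>j\<in>pEv E (fst e). f j)"
  using prod.reindex[OF inj_on_fst_lEv, of f E T e] fst_lEv by (simp add: comp_def)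

lemma prod_lEc_reindex:
  "valid_lift E T \<pi> \<Longrightarrow> e \<in> lift_edges E T \<Longrightarrow>
     (\<Prod>e'\<in>lEc E T \<pi> e. f (fst e')) = (\<Prod>j\<in>pEc E (fst e). f j)"
  using prod.reindex[OF inj_on_fst_lEc, of E T \<pi> f e] fst_lEc by (simp add: comp_def)

lemma cmsg_erasure_prob:
  assumes proto: "protograph nV nC E" and lift: "valid_lift E T \<pi>"
    and girth: "enat (4 * Suc s) < lift_girth E T \<pi>" and e': "e' \<in> lEv E T e"
    and IH: "\<And>e''. e'' \<in> lEc E T \<pi> e' \<Longrightarrow>
               bernoulli_prob \<epsilon> (lift_bits nV T) (\<lambda>S. bmsg E T \<pi> S s e'') = de_x E \<epsilon> s (fst e'')"
  shows "bernoulli_prob \<epsilon> (lift_bits nV T) (\<lambda>S. cmsg E T \<pi> S s e') =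
           1 - (\<Prod>k\<in>pEc E (fst e'). 1 - de_x E \<epsilon> s k)"
proof -
  have e'E: "e' \<in> lift_edges E T" using e' lEv_subset by blast
  have "bernoulli_prob \<epsilon> (lift_bits nV T) (\<lambda>S. cmsg E T \<pi> S s e') =
        1 - (\<Prod>e''\<in>lEc E T \<pi> e'. 1 - bernoulli_prob \<epsilon> (lift_bits nV T) (\<lambda>S. bmsg E T \<pi> S s e''))"
    unfolding cmsg_def
  proof (rule bernoulli_prob_Bex_indep[OF finite_lift_bits finite_lEc])
    show "msg_support E T \<pi> s e'' \<subseteq> lift_bits nV T" if "e'' \<in> lEc E T \<pi> e'" for e''
      using msg_support_subset_lift_bits[OF proto] that lEc_subset by blast
    show "msg_support E T \<pi> s e1 \<inter> msg_support E T \<pi> s e2 = {}"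
      if "e1 \<in> lEc E T \<pi> e'" "e2 \<in> lEc E T \<pi> e'" "e1 \<noteq> e2" for e1 e2
      using msg_supports_disjoint[OF girth e' _ e'] that by blast
  qed (rule bmsg_depends_on_support)
  also have "\<dots> = 1 - (\<Prod>e''\<in>lEc E T \<pi> e'. 1 - de_x E \<epsilon> s (fst e''))" by (simp add: IH)
  also have "\<dots> = 1 - (\<Prod>k\<in>pEc E (fst e'). 1 - de_x E \<epsilon> s k)"
    using prod_lEc_reindex[OF lift e'E] by simp
  finally show ?thesis .
qed

lemma bmsg_erasure_prob:
  assumes proto: "protograph nV nC E" and lift: "valid_lift E T \<pi>"
  shows "e \<in> lift_edges E T \<Longrightarrow> enat (4 * s) < lift_girth E T \<pi> \<Longrightarrow>
         bernoulli_prob \<epsilon> (lift_bits nV T) (\<lambda>S. bmsg E T \<pi> S s e) = de_x E \<epsilon> s (fst e)"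
proof (induction s arbitrary: e)
  case 0
  then show ?case by (simp add: bernoulli_prob_mem finite_lift_bits lift_v_in_lift_bits[OF proto])
next
  case (Suc s)
  let ?B = "lift_bits nV T" and ?U = "\<lambda>e'. \<Union>e''\<in>lEc E T \<pi> e'. msg_support E T \<pi> s e''"
  note girth = Suc.prems(2)
  have girth_s: "enat (4 * s) < lift_girth E T \<pi>"
    using girth by (meson enat_ord_simps(2) le_less_trans less_imp_le_nat linorder_not_less
        mult_le_mono2 not_less_eq_eq)
  have U: "?U e' \<subseteq> ?B" for e'
    using msg_support_subset_lift_bits[OF proto] lEc_subset by blast
  have "bernoulli_prob \<epsilon> ?B (\<lambda>S. bmsg E T \<pi> S (Suc s) e) =
        bernoulli_prob \<epsilon> ?B (\<lambda>S. lift_v E e \<in> S \<and> (\<forall>e'\<in>lEv E T e. cmsg E T \<pi> S s e'))"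
    by (simp add: cmsg_def)
  also have "\<dots> = bernoulli_prob \<epsilon> ?B (\<lambda>S. lift_v E e \<in> S) *
                  bernoulli_prob \<epsilon> ?B (\<lambda>S. \<forall>e'\<in>lEv E T e. cmsg E T \<pi> S s e')"
  proof (rule bernoulli_prob_conj_indep[OF finite_lift_bits, where A = "{lift_v E e}" and C = "\<Union>e'\<in>lEv E T e. ?U e'"])
    show "{lift_v E e} \<inter> (\<Union>e'\<in>lEv E T e. ?U e') = {}"
      using lift_v_notin_msg_support[OF girth] by blast
    show "depends_on (\<lambda>S. \<forall>e'\<in>lEv E T e. cmsg E T \<pi> S s e') (\<Union>e'\<in>lEv E T e. ?U e')"
      by (rule depends_on_Ball) (rule cmsg_depends_on_support)
  qed (use lift_v_in_lift_bits[OF proto Suc.prems(1)] U in \<open>auto simp: depends_on_def\<close>)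
  also have "bernoulli_prob \<epsilon> ?B (\<lambda>S. \<forall>e'\<in>lEv E T e. cmsg E T \<pi> S s e') =
             (\<Prod>e'\<in>lEv E T e. bernoulli_prob \<epsilon> ?B (\<lambda>S. cmsg E T \<pi> S s e'))"
  proof (rule bernoulli_prob_Ball_indep[OF finite_lift_bits finite_lEv, where D = ?U])
    show "?U e1 \<inter> ?U e2 = {}" if "e1 \<in> lEv E T e" "e2 \<in> lEv E T e" "e1 \<noteq> e2" for e1 e2
      using msg_supports_disjoint[OF girth] that by blast
  qed (use U cmsg_depends_on_support in auto)
  also have "\<dots> = (\<Prod>e'\<in>lEv E T e. 1 - (\<Prod>k\<in>pEc E (fst e'). 1 - de_x E \<epsilon> s k))"
    using cmsg_erasure_prob[OF proto lift girth] Suc.IH[OF _ girth_s] lEc_subset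
    by (intro prod.cong) blast+
  also have "\<dots> = (\<Prod>j\<in>pEv E (fst e). 1 - (\<Prod>k\<in>pEc E j. 1 - de_x E \<epsilon> s k))"
    by (rule prod_lEv_reindex[OF Suc.prems(1)])
  finally show ?case
    by (simp add: bernoulli_prob_mem finite_lift_bits lift_v_in_lift_bits[OF proto Suc.prems(1)])
qed

lemma bit_erased_imp_bmsg:
  assumes "e \<in> lift_edges E T" "bit_erased E T \<pi> S t (lift_v E e)"
  shows "bmsg E T \<pi> S t e"
proof (cases t)
  case 0 then show ?thesis using assms by (simp add: bit_erased_def)
next
  case (Suc s)
  have "cmsg E T \<pi> S s e'" if "e' \<in> lEv E T e" for e'
    using assms that Suc unfolding bit_erased_def lEv_def by auto
  then show ?thesis using assms Suc by (simp add: bit_erased_def cmsg_def)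
qed

text \<open>Union bound over the bits; each bit has an edge since all variable degrees are positive.\<close>

lemma block_erasure_prob_le:
  assumes proto: "protograph nV nC E" and lift: "valid_lift E T \<pi>"
    and deg: "\<forall>v<nV. vdeg E v \<ge> 1" and eps: "0 \<le> \<epsilon>" "\<epsilon> \<le> 1"
    and girth: "enat (4 * t) < lift_girth E T \<pi>"
  shows "block_erasure_prob nV E T \<pi> \<epsilon> t \<le> real (T * nV) * Max (de_x E \<epsilon> t ` {..<length E})"
proof -
  let ?B = "lift_bits nV T" and ?M = "Max (de_x E \<epsilon> t ` {..<length E})"
  have "block_erasure_prob nV E T \<pi> \<epsilon> t =
        bernoulli_prob \<epsilon> ?B (\<lambda>S. \<exists>b\<in>?B. bit_erased E T \<pi> S t b)"
    unfolding block_erasure_prob_def bernoulli_prob_def bernoulli_weight_def by simp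
  also have "\<dots> \<le> (\<Sum>b\<in>?B. bernoulli_prob \<epsilon> ?B (\<lambda>S. bit_erased E T \<pi> S t b))"
    by (rule bernoulli_prob_Bex_le[OF eps finite_lift_bits])
  also have "\<dots> \<le> (\<Sum>b\<in>?B. ?M)"
  proof (rule sum_mono)
    fix b assume "b \<in> ?B"
    then obtain v \<tau> where b: "b = (v, \<tau>)" "v < nV" "\<tau> < T" by (auto simp: lift_bits_def)
    have "filter (\<lambda>e. fst e = v) E \<noteq> []" using deg b by (auto simp: vdeg_def)
    then obtain x where "x \<in> set E" "fst x = v" by (auto simp: filter_empty_conv)
    then obtain i where i: "i < length E" "fst (E ! i) = v" by (metis in_set_conv_nth)
    then have e: "(i, \<tau>) \<in> lift_edges E T" "lift_v E (i, \<tau>) = b"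
      using b by (auto simp: lift_edges_def lift_v_def)
    have "bernoulli_prob \<epsilon> ?B (\<lambda>S. bit_erased E T \<pi> S t b) \<le>
          bernoulli_prob \<epsilon> ?B (\<lambda>S. bmsg E T \<pi> S t (i, \<tau>))"
      using bit_erased_imp_bmsg[OF e(1)] e(2) by (intro bernoulli_prob_mono[OF eps]) auto
    also have "\<dots> = de_x E \<epsilon> t i" using bmsg_erasure_prob[OF proto lift e(1) girth] by simp
    also have "\<dots> \<le> ?M" using i by (intro Max_ge) auto
    finally show "bernoulli_prob \<epsilon> ?B (\<lambda>S. bit_erased E T \<pi> S t b) \<le> ?M" .
  qed
  finally show ?thesis by (simp add: card_lift_bits)
qed

section \<open>Density evolution\<close>

lemma de_x_bounds:
  assumes "0 \<le> \<epsilon>" "\<epsilon> \<le> 1"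
  shows "0 \<le> de_x E \<epsilon> t i \<and> de_x E \<epsilon> t i \<le> \<epsilon>"
proof (induction t arbitrary: i)
  case 0 then show ?case using assms by simp
next
  case (Suc t)
  have "0 \<le> de_x E \<epsilon> t k" "de_x E \<epsilon> t k \<le> 1" for k using Suc.IH assms(2) by (meson order.trans)+
  then have "0 \<le> (\<Prod>j\<in>pEv E i. 1 - (\<Prod>k\<in>pEc E j. 1 - de_x E \<epsilon> t k))"
       "(\<Prod>j\<in>pEv E i. 1 - (\<Prod>k\<in>pEc E j. 1 - de_x E \<epsilon> t k)) \<le> 1"
    by (auto intro!: prod_nonneg prod_le_1)
  then show ?case using assms by (simp add: mult_left_le)
qed

lemma de_step_mono:
  fixes x x' :: "nat \<Rightarrow> real"
  assumes "0 \<le> a" "a \<le> b" "b \<le> 1" and x: "\<And>k. 0 \<le> x k \<and> x k \<le> x' k \<and> x' k \<le> 1"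
  shows "a * (\<Prod>j\<in>P. 1 - (\<Prod>k\<in>Q j. 1 - x k)) \<le> b * (\<Prod>j\<in>P. 1 - (\<Prod>k\<in>Q j. 1 - x' k))"
proof -
  have "0 \<le> x k" "x k \<le> x' k" "x' k \<le> 1" "x k \<le> 1" for k using x by (meson order.trans)+
  then have inner: "0 \<le> (\<Prod>k\<in>Q j. 1 - x' k)" "(\<Prod>k\<in>Q j. 1 - x' k) \<le> (\<Prod>k\<in>Q j. 1 - x k)"
    "(\<Prod>k\<in>Q j. 1 - x k) \<le> 1" for j
    by (auto intro!: prod_nonneg prod_mono prod_le_1)
  then have "0 \<le> (\<Prod>j\<in>P. 1 - (\<Prod>k\<in>Q j. 1 - x k))"
    "(\<Prod>j\<in>P. 1 - (\<Prod>k\<in>Q j. 1 - x k)) \<le> (\<Prod>j\<in>P. 1 - (\<Prod>k\<in>Q j. 1 - x' k))"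
    by (auto intro!: prod_nonneg prod_mono)
  then show ?thesis using assms by (meson mult_mono order.trans)
qed

lemma de_x_Suc_le:
  assumes "0 \<le> \<epsilon>" "\<epsilon> \<le> 1"
  shows "de_x E \<epsilon> (Suc t) i \<le> de_x E \<epsilon> t i"
proof (induction t arbitrary: i)
  case 0 then show ?case using de_x_bounds[OF assms, of E 1 i] by simp
next
  case (Suc t)
  have "0 \<le> de_x E \<epsilon> (Suc t) k \<and> de_x E \<epsilon> (Suc t) k \<le> de_x E \<epsilon> t k \<and> de_x E \<epsilon> t k \<le> 1" for k
    using Suc.IH de_x_bounds[OF assms] assms(2) by (meson order.trans)
  then show ?case by (simp only: de_x.simps) (rule de_step_mono[OF assms(1) order.refl assms(2)])
qed

lemma de_x_antimono:
  assumes "0 \<le> \<epsilon>" "\<epsilon> \<le> 1" "t \<le> s"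
  shows "de_x E \<epsilon> s i \<le> de_x E \<epsilon> t i"
  using assms(3)
proof (induction s rule: dec_induct)
  case (step s) then show ?case using de_x_Suc_le[OF assms(1,2), of E s i] by linarith
qed simp

lemma de_x_mono_eps:
  assumes "0 \<le> \<epsilon>" "\<epsilon> \<le> \<epsilon>'" "\<epsilon>' \<le> 1"
  shows "de_x E \<epsilon> t i \<le> de_x E \<epsilon>' t i"
proof (induction t arbitrary: i)
  case 0 then show ?case using assms by simp
next
  case (Suc t)
  have "0 \<le> de_x E \<epsilon> t k \<and> de_x E \<epsilon> t k \<le> de_x E \<epsilon>' t k \<and> de_x E \<epsilon>' t k \<le> 1" for k
    using Suc.IH de_x_bounds[of \<epsilon> E] de_x_bounds[of \<epsilon>' E] assms by (meson order.trans)
  then show ?case by (simp only: de_x.simps) (rule de_step_mono[OF assms])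
qed

definition de_max :: "(nat \<times> nat) list \<Rightarrow> real \<Rightarrow> nat \<Rightarrow> real" where
  "de_max E \<epsilon> t = Max (de_x E \<epsilon> t ` {..<length E})"

lemma de_x_le_de_max: "i < length E \<Longrightarrow> de_x E \<epsilon> t i \<le> de_max E \<epsilon> t"
  unfolding de_max_def by (intro Max_ge) auto

lemma de_max_attained:
  assumes "E \<noteq> []"
  obtains i where "i < length E" "de_max E \<epsilon> t = de_x E \<epsilon> t i"
proof -
  have "de_max E \<epsilon> t \<in> de_x E \<epsilon> t ` {..<length E}"
    unfolding de_max_def using assms by (intro Max_in) auto
  then show ?thesis using that by auto
qed

lemma de_max_nonneg: "E \<noteq> [] \<Longrightarrow> 0 \<le> \<epsilon> \<Longrightarrow> \<epsilon> \<le> 1 \<Longrightarrow> 0 \<le> de_max E \<epsilon> t"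
  using de_x_le_de_max[of 0 E \<epsilon> t] de_x_bounds[of \<epsilon> E t 0] by force

lemma de_max_antimono:
  assumes "E \<noteq> []" "0 \<le> \<epsilon>" "\<epsilon> \<le> 1" "t \<le> s"
  shows "de_max E \<epsilon> s \<le> de_max E \<epsilon> t"
proof -
  obtain i where "i < length E" "de_max E \<epsilon> s = de_x E \<epsilon> s i" using de_max_attained[OF assms(1)] .
  then show ?thesis using de_x_antimono[OF assms(2-4)] de_x_le_de_max by (metis order.trans)
qed

lemma de_max_mono_eps:
  assumes "E \<noteq> []" "0 \<le> \<epsilon>" "\<epsilon> \<le> \<epsilon>'" "\<epsilon>' \<le> 1"
  shows "de_max E \<epsilon> t \<le> de_max E \<epsilon>' t"
proof -
  obtain i where "i < length E" "de_max E \<epsilon> t = de_x E \<epsilon> t i" using de_max_attained[OF assms(1)] .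
  then show ?thesis using de_x_mono_eps[OF assms(2-4)] de_x_le_de_max by (metis order.trans)
qed

lemma de_max_tendsto_zero:
  assumes E: "E \<noteq> []" and eps: "0 \<le> \<epsilon>" "\<epsilon> < de_threshold E"
  shows "\<epsilon> \<le> 1" "de_max E \<epsilon> \<longlonglongrightarrow> 0"
proof -
  let ?S = "{\<epsilon> \<in> {0..1}. (\<lambda>t. Max (de_x E \<epsilon> t ` {..<length E})) \<longlonglongrightarrow> 0}"
  have "de_x E 0 t i = 0" for t i by (cases t) auto
  moreover have "(\<lambda>i. 0::real) ` {..<length E} = {0}" using E by auto
  ultimately have "0 \<in> ?S" by simp
  moreover have "bdd_above ?S" by (rule bdd_aboveI[of _ 1]) auto
  ultimately obtain \<epsilon>' where \<epsilon>': "\<epsilon>' \<in> ?S" "\<epsilon> < \<epsilon>'"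
    using eps(2) less_cSup_iff[of ?S] unfolding de_threshold_def by blast
  then show "\<epsilon> \<le> 1" by auto
  show "de_max E \<epsilon> \<longlonglongrightarrow> 0"
  proof (rule tendsto_sandwich[OF _ _ tendsto_const])
    show "(de_max E \<epsilon>') \<longlonglongrightarrow> 0" using \<epsilon>' unfolding de_max_def by simp
  qed (use de_max_nonneg[OF E eps(1)] de_max_mono_eps[OF E eps(1)] \<epsilon>' in auto)
qed

section \<open>Quadratic decay below the threshold\<close>

lemma one_minus_prod_le_sum:
  fixes x :: "'a \<Rightarrow> real"
  assumes "finite A" "\<And>k. k \<in> A \<Longrightarrow> 0 \<le> x k \<and> x k \<le> 1"
  shows "1 - (\<Prod>k\<in>A. 1 - x k) \<le> (\<Sum>k\<in>A. x k)"
  using assms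
proof (induction A rule: finite_induct)
  case (insert a A)
  have P: "0 \<le> (\<Prod>k\<in>A. 1 - x k)" "(\<Prod>k\<in>A. 1 - x k) \<le> 1" and xa: "0 \<le> x a"
    using insert.prems by (auto intro!: prod_nonneg prod_le_1)
  have "1 - (\<Prod>k\<in>insert a A. 1 - x k) = 1 - (1 - x a) * (\<Prod>k\<in>A. 1 - x k)"
    using insert.hyps by simp
  also have "\<dots> \<le> x a + (1 - (\<Prod>k\<in>A. 1 - x k))"
    using P xa by (simp add: algebra_simps mult_left_le)
  also have "\<dots> \<le> x a + (\<Sum>k\<in>A. x k)" using insert.IH insert.prems by simp
  also have "\<dots> = (\<Sum>k\<in>insert a A. x k)" using insert.hyps by simp
  finally show ?case .
qed simp

lemma prod_le_mult_two:
  fixes f :: "'a \<Rightarrow> real"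
  assumes "finite A" "j1 \<in> A" "j2 \<in> A" "j1 \<noteq> j2" "\<And>j. j \<in> A \<Longrightarrow> 0 \<le> f j \<and> f j \<le> 1"
  shows "prod f A \<le> f j1 * f j2"
proof -
  have "prod f A = f j1 * (f j2 * prod f (A - {j1} - {j2}))"
    using assms by (simp add: prod.remove[of A j1] prod.remove[of "A - {j1}" j2])
  then have "prod f A = f j1 * f j2 * prod f (A - {j1, j2})" by (simp add: set_diff_eq insert_commute)
  moreover have "0 \<le> prod f (A - {j1, j2})" "prod f (A - {j1, j2}) \<le> 1"
    using assms(5) by (auto intro!: prod_nonneg prod_le_1)
  ultimately show ?thesis
    using assms(2,3,5) by (simp add: mult_left_le mult_nonneg_nonneg)
qed

lemma finite_pEv: "finite (pEv E i)" by (rule finite_subset[of _ "{..<length E}"]) (auto simp: pEv_def)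
lemma finite_pEc: "finite (pEc E i)" by (rule finite_subset[of _ "{..<length E}"]) (auto simp: pEc_def)

lemma card_pEv:
  assumes "i < length E"
  shows "card (pEv E i) = vdeg E (fst (E ! i)) - 1"
proof -
  have "vdeg E (fst (E ! i)) = card {j. j < length E \<and> fst (E ! j) = fst (E ! i)}"
    unfolding vdeg_def by (rule length_filter_conv_card)
  moreover have "pEv E i = {j. j < length E \<and> fst (E ! j) = fst (E ! i)} - {i}" by (auto simp: pEv_def)
  ultimately show ?thesis using assms by (simp add: card_Diff_singleton)
qed

text \<open>(k, i) records that the message on edge k reaches edge i through the check of the other edge
  at the degree-2 variable node of i.\<close>

definition deg2_feeds :: "(nat \<times> nat) list \<Rightarrow> (nat \<times> nat) set" where
  "deg2_feeds E = {(k, i). i < length E \<and> vdeg E (fst (E ! i)) = 2 \<and> (\<exists>j\<in>pEv E i. k \<in> pEc E j)}"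

lemma loopless_proto: "loopless Ed (proto_ends E)"
  by (simp add: loopless_def proto_ends_def)

lemma deg2_chain_walk:
  fixes f g :: "nat \<Rightarrow> nat" and a k :: nat
  assumes f: "\<And>m. f m < length E \<and> vdeg E (fst (E ! f m)) = 2"
    and g: "\<And>m. g m \<in> pEv E (f m) \<and> f (Suc m) \<in> pEc E (g m)"
  defines "ve \<equiv> \<lambda>p. if even p then Inr (snd (E ! f (a + p div 2))) else Inl (fst (E ! f (a + p div 2)))"
    and "ee \<equiv> \<lambda>p. if even p then f (a + p div 2) else g (a + p div 2)"
  shows "walk {i. i < length E \<and> vdeg E (fst (E ! i)) = 2} (proto_ends E) k ee ve"
    and "non_backtracking k ee"
proof -
  have gp: "g m < length E" "fst (E ! g m) = fst (E ! f m)" "g m \<noteq> f m" "f m \<noteq> g m"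
     and fp: "snd (E ! f (Suc m)) = snd (E ! g m)" "f (Suc m) \<noteq> g m" "g m \<noteq> f (Suc m)" for m
    using g[of m] by (auto simp: pEv_def pEc_def)
  show "walk {i. i < length E \<and> vdeg E (fst (E ! i)) = 2} (proto_ends E) k ee ve"
    unfolding walk_def
  proof (intro allI impI)
    fix p
    show "ee p \<in> {i. i < length E \<and> vdeg E (fst (E ! i)) = 2} \<and>
          (proto_ends E (ee p) = (ve p, ve (Suc p)) \<or> proto_ends E (ee p) = (ve (Suc p), ve p))"
    proof (cases "even p")
      case True
      then have "Suc p div 2 = p div 2" "odd (Suc p)" by auto
      then show ?thesis using True f[of "a + p div 2"] by (simp add: ee_def ve_def proto_ends_def)
    next
      case False
      then have "Suc p div 2 = Suc (p div 2)" "even (Suc p)" by (auto elim: oddE)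
      then show ?thesis using False f[of "a + p div 2"] gp[of "a + p div 2"] fp[of "a + p div 2"]
        by (simp add: ee_def ve_def proto_ends_def)
    qed
  qed
  show "non_backtracking k ee"
    unfolding non_backtracking_def
  proof (intro allI impI)
    fix p
    show "ee p \<noteq> ee (Suc p)"
    proof (cases "even p")
      case True
      then have "Suc p div 2 = p div 2" "odd (Suc p)" by auto
      then show ?thesis using True gp(4) by (simp add: ee_def)
    next
      case False
      then have "Suc p div 2 = Suc (p div 2)" "even (Suc p)" by (auto elim: oddE)
      then show ?thesis using False fp(3) by (simp add: ee_def)
    qed
  qed
qed

lemma wf_deg2_feeds:
  assumes "deg2_acyclic E"
  shows "wf (deg2_feeds E)"
  unfolding wf_iff_no_infinite_down_chain
proof
  assume "\<exists>f. \<forall>m. (f (Suc m), f m) \<in> deg2_feeds E"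
  then obtain f where chain: "\<And>m. (f (Suc m), f m) \<in> deg2_feeds E" by blast
  then have "\<forall>m. \<exists>j. j \<in> pEv E (f m) \<and> f (Suc m) \<in> pEc E j" unfolding deg2_feeds_def by blast
  then obtain g where g: "\<And>m. g m \<in> pEv E (f m) \<and> f (Suc m) \<in> pEc E (g m)" by metis
  have f: "\<And>m. f m < length E \<and> vdeg E (fst (E ! f m)) = 2"
    using chain unfolding deg2_feeds_def by blast
  have "range f \<subseteq> {..<length E}" using f by auto
  then have "finite (range f)" using finite_subset by blast
  then have "\<not> inj f" using finite_imageD infinite_UNIV_nat by blast
  then obtain a b where ab: "f a = f b" "a < b" unfolding inj_def by (metis linorder_neqE_nat)
  note walk = deg2_chain_walk[where f = f and g = g and a = a and k = "2 * (b - a)", OF f g]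
  have "girth {i. i < length E \<and> vdeg E (fst (E ! i)) = 2} (proto_ends E) \<le> enat (2 * (b - a))"
    by (rule closed_walk_girth_le[OF walk loopless_proto]) (use ab in simp_all)
  moreover have "girth {i. i < length E \<and> vdeg E (fst (E ! i)) = 2} (proto_ends E) = \<infinity>"
    using assms unfolding deg2_acyclic_def girth_def by (simp add: top_enat_def)
  ultimately show False by simp
qed

definition quadratically_dominated :: "(nat \<Rightarrow> real) \<Rightarrow> (nat \<Rightarrow> real) \<Rightarrow> bool" where
  "quadratically_dominated x m \<longleftrightarrow> (\<exists>K r. \<forall>t s. t + r \<le> s \<longrightarrow> x s \<le> K * (m t)\<^sup>2)"

lemma quadratically_dominated_shift:
  assumes "quadratically_dominated y m" "\<And>s. x (s + d) \<le> y s"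
  shows "quadratically_dominated x m"
proof -
  obtain K r where y: "\<And>t s. t + r \<le> s \<Longrightarrow> y s \<le> K * (m t)\<^sup>2"
    using assms(1) unfolding quadratically_dominated_def by blast
  have "x s \<le> K * (m t)\<^sup>2" if "t + (r + d) \<le> s" for t s
  proof -
    have "t + r \<le> s - d" using that by linarith
    then show ?thesis using assms(2)[of "s - d"] y[of t "s - d"] that by simp
  qed
  then show ?thesis unfolding quadratically_dominated_def by blast
qed

lemma quadratically_dominated_sum:
  assumes "finite I" "\<And>i. i \<in> I \<Longrightarrow> quadratically_dominated (x i) m"
  shows "quadratically_dominated (\<lambda>s. \<Sum>i\<in>I. x i s) m"
proof -
  have "\<forall>i\<in>I. \<exists>K r. \<forall>t s. t + r \<le> s \<longrightarrow> x i s \<le> K * (m t)\<^sup>2"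
    using assms(2) unfolding quadratically_dominated_def by blast
  then obtain K where "\<forall>i\<in>I. \<exists>r. \<forall>t s. t + r \<le> s \<longrightarrow> x i s \<le> K i * (m t)\<^sup>2"
    by (rule bchoice[THEN exE])
  then obtain r where "\<forall>i\<in>I. \<forall>t s. t + r i \<le> s \<longrightarrow> x i s \<le> K i * (m t)\<^sup>2"
    by (rule bchoice[THEN exE])
  then have Kr: "\<And>i t s. i \<in> I \<Longrightarrow> t + r i \<le> s \<Longrightarrow> x i s \<le> K i * (m t)\<^sup>2" by blast
  have "(\<Sum>i\<in>I. x i s) \<le> (\<Sum>i\<in>I. K i) * (m t)\<^sup>2" if "t + (\<Sum>i\<in>I. r i) \<le> s" for t s
  proof -
    have "t + r i \<le> s" if "i \<in> I" for i
      using member_le_sum[of i I r] that \<open>t + (\<Sum>i\<in>I. r i) \<le> s\<close> assms(1) by simp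
    then have "(\<Sum>i\<in>I. x i s) \<le> (\<Sum>i\<in>I. K i * (m t)\<^sup>2)" by (intro sum_mono Kr)
    then show ?thesis by (simp add: sum_distrib_right)
  qed
  then show ?thesis unfolding quadratically_dominated_def by blast
qed

lemma quadratically_dominated_square:
  assumes "0 \<le> C" "\<And>t. 0 \<le> m t" "\<And>t s. t \<le> s \<Longrightarrow> m s \<le> m t" "\<And>s. x (Suc s) \<le> (C * m s)\<^sup>2"
  shows "quadratically_dominated x m"
proof -
  have "x s \<le> C\<^sup>2 * (m t)\<^sup>2" if "t + 1 \<le> s" for t s
  proof -
    define s' where "s' = s - 1"
    have s': "s = Suc s'" "t \<le> s'" using that by (auto simp: s'_def)
    have "(C * m s')\<^sup>2 \<le> (C * m t)\<^sup>2"
      using assms s' by (intro power_mono mult_left_mono) auto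
    then show ?thesis using assms(4)[of s'] s' by (simp add: power_mult_distrib)
  qed
  then show ?thesis unfolding quadratically_dominated_def by blast
qed

context
  fixes nV nC :: nat and E :: "(nat \<times> nat) list" and \<epsilon> :: real
  assumes proto: "protograph nV nC E" and deg: "\<forall>v<nV. vdeg E v \<ge> 2"
    and acyc: "deg2_acyclic E" and eps: "0 \<le> \<epsilon>" "\<epsilon> \<le> 1" and nonempty: "E \<noteq> []"
begin

lemma check_erasure_bounds:
  fixes j s :: nat
  defines "y \<equiv> 1 - (\<Prod>k\<in>pEc E j. 1 - de_x E \<epsilon> s k)"
  shows "0 \<le> y" "y \<le> 1" "y \<le> (\<Sum>k\<in>pEc E j. de_x E \<epsilon> s k)" "y \<le> real (length E) * de_max E \<epsilon> s"
proof -
  have x: "0 \<le> de_x E \<epsilon> s k" "de_x E \<epsilon> s k \<le> 1" for k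
    using de_x_bounds[OF eps, of E s k] eps(2) by linarith+
  have "0 \<le> (\<Prod>k\<in>pEc E j. 1 - de_x E \<epsilon> s k)" by (rule prod_nonneg) (simp add: x)
  moreover have "(\<Prod>k\<in>pEc E j. 1 - de_x E \<epsilon> s k) \<le> 1" by (rule prod_le_1) (simp add: x)
  ultimately show "0 \<le> y" "y \<le> 1" unfolding y_def by simp_all
  show y_sum: "y \<le> (\<Sum>k\<in>pEc E j. de_x E \<epsilon> s k)"
    unfolding y_def by (rule one_minus_prod_le_sum[OF finite_pEc]) (simp add: x)
  have "card (pEc E j) \<le> length E"
    using card_mono[of "{..<length E}" "pEc E j"] by (auto simp: pEc_def)
  have "(\<Sum>k\<in>pEc E j. de_x E \<epsilon> s k) \<le> (\<Sum>k\<in>pEc E j. de_max E \<epsilon> s)"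
    by (rule sum_mono) (simp add: pEc_def de_x_le_de_max)
  also have "\<dots> \<le> real (length E) * de_max E \<epsilon> s"
    using \<open>card (pEc E j) \<le> length E\<close> de_max_nonneg[OF nonempty eps] by (simp add: mult_right_mono)
  finally show "y \<le> real (length E) * de_max E \<epsilon> s" using y_sum by simp
qed

text \<open>At a variable node of degree at least 3 two incoming check messages are multiplied:
  this is the source of the quadratic decay.\<close>

lemma de_x_deg3_le:
  assumes i: "i < length E" and d: "vdeg E (fst (E ! i)) \<ge> 3"
  shows "de_x E \<epsilon> (Suc s) i \<le> (real (length E) * de_max E \<epsilon> s)\<^sup>2"
proof -
  let ?y = "\<lambda>j. 1 - (\<Prod>k\<in>pEc E j. 1 - de_x E \<epsilon> s k)"
  have "card (pEv E i) \<ge> 2" using card_pEv[OF i] d by simp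
  then have "pEv E i \<noteq> {}" by auto
  then obtain j1 where j1: "j1 \<in> pEv E i" by blast
  then have "card (pEv E i - {j1}) \<ge> 1" using \<open>card (pEv E i) \<ge> 2\<close> finite_pEv by simp
  then have "pEv E i - {j1} \<noteq> {}" by (metis card.empty not_one_le_zero)
  then obtain j2 where "j2 \<in> pEv E i - {j1}" by blast
  then have j: "j1 \<in> pEv E i" "j2 \<in> pEv E i" "j1 \<noteq> j2" using j1 by auto
  have "de_x E \<epsilon> (Suc s) i = \<epsilon> * prod ?y (pEv E i)" by simp
  also have "\<dots> \<le> prod ?y (pEv E i)"
    using eps check_erasure_bounds(1,2) by (simp add: mult_left_le_one_le prod_nonneg)
  also have "\<dots> \<le> ?y j1 * ?y j2"
    using check_erasure_bounds(1,2) by (intro prod_le_mult_two[OF finite_pEv j]) auto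
  also have "\<dots> \<le> (real (length E) * de_max E \<epsilon> s) * (real (length E) * de_max E \<epsilon> s)"
    using check_erasure_bounds(1,4) de_max_nonneg[OF nonempty eps] by (intro mult_mono) auto
  finally show ?thesis by (simp add: power2_eq_square)
qed

lemma de_x_deg2_le:
  assumes i: "i < length E" and d: "vdeg E (fst (E ! i)) = 2"
  obtains j where "pEv E i = {j}" "\<And>s. de_x E \<epsilon> (Suc s) i \<le> (\<Sum>k\<in>pEc E j. de_x E \<epsilon> s k)"
proof -
  have "card (pEv E i) = 1" using card_pEv[OF i] d by simp
  then obtain j where j: "pEv E i = {j}" by (rule card_1_singletonE)
  have "de_x E \<epsilon> (Suc s) i \<le> (\<Sum>k\<in>pEc E j. de_x E \<epsilon> s k)" for s
  proof -
    have "de_x E \<epsilon> (Suc s) i = \<epsilon> * (1 - (\<Prod>k\<in>pEc E j. 1 - de_x E \<epsilon> s k))" using j by simp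
    also have "\<dots> \<le> 1 - (\<Prod>k\<in>pEc E j. 1 - de_x E \<epsilon> s k)"
      using eps check_erasure_bounds(1) by (rule_tac mult_left_le_one_le) auto
    also have "\<dots> \<le> (\<Sum>k\<in>pEc E j. de_x E \<epsilon> s k)" by (rule check_erasure_bounds(3))
    finally show ?thesis .
  qed
  then show ?thesis using that j by blast
qed

lemma de_x_quadratically_dominated:
  "i < length E \<Longrightarrow> quadratically_dominated (\<lambda>s. de_x E \<epsilon> s i) (de_max E \<epsilon>)"
proof (induction i rule: wf_induct_rule[OF wf_deg2_feeds[OF acyc]])
  case (1 i)
  have "vdeg E (fst (E ! i)) \<ge> 2" using proto deg 1(2) unfolding protograph_def by (meson nth_mem)
  then consider "vdeg E (fst (E ! i)) \<ge> 3" | "vdeg E (fst (E ! i)) = 2" by linarith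
  then show ?case
  proof cases
    case 1
    then show ?thesis
      using de_x_deg3_le de_max_nonneg[OF nonempty eps] de_max_antimono[OF nonempty eps] \<open>i < length E\<close>
      by (intro quadratically_dominated_square[where C = "real (length E)"]) simp_all
  next
    case 2
    then obtain j where j: "pEv E i = {j}"
      and le: "\<And>s. de_x E \<epsilon> (Suc s) i \<le> (\<Sum>k\<in>pEc E j. de_x E \<epsilon> s k)"
      using de_x_deg2_le \<open>i < length E\<close> by blast
    have "quadratically_dominated (\<lambda>s. de_x E \<epsilon> s k) (de_max E \<epsilon>)" if "k \<in> pEc E j" for k
      using that 2 j \<open>i < length E\<close> by (intro "1.IH") (auto simp: deg2_feeds_def pEc_def)
    then have "quadratically_dominated (\<lambda>s. \<Sum>k\<in>pEc E j. de_x E \<epsilon> s k) (de_max E \<epsilon>)"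
      by (rule quadratically_dominated_sum[OF finite_pEc])
    then show ?thesis by (rule quadratically_dominated_shift[where d = 1]) (use le in \<open>simp del: de_x.simps\<close>)
  qed
qed

lemma de_max_quadratic_decay:
  obtains K L where "1 \<le> K" "1 \<le> L" "\<And>t. de_max E \<epsilon> (t + L) \<le> K * (de_max E \<epsilon> t)\<^sup>2"
proof -
  have "de_max E \<epsilon> s \<le> (\<Sum>i<length E. de_x E \<epsilon> s i)" for s
  proof -
    obtain i where "i < length E" "de_max E \<epsilon> s = de_x E \<epsilon> s i" using de_max_attained[OF nonempty] .
    then show ?thesis using de_x_bounds[OF eps] by (auto intro: member_le_sum)
  qed
  moreover have "quadratically_dominated (\<lambda>s. \<Sum>i<length E. de_x E \<epsilon> s i) (de_max E \<epsilon>)"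
    using de_x_quadratically_dominated by (rule_tac quadratically_dominated_sum) auto
  ultimately have "quadratically_dominated (de_max E \<epsilon>) (de_max E \<epsilon>)"
    by (rule_tac quadratically_dominated_shift[where d = 0]) simp_all
  then obtain K r where Kr: "\<And>t s. t + r \<le> s \<Longrightarrow> de_max E \<epsilon> s \<le> K * (de_max E \<epsilon> t)\<^sup>2"
    unfolding quadratically_dominated_def by blast
  have "de_max E \<epsilon> (t + Suc r) \<le> max K 1 * (de_max E \<epsilon> t)\<^sup>2" for t
  proof -
    have "K * (de_max E \<epsilon> t)\<^sup>2 \<le> max K 1 * (de_max E \<epsilon> t)\<^sup>2" by (rule mult_right_mono) auto
    then show ?thesis using Kr[of t "t + Suc r"] by simp
  qed
  then show ?thesis using that[of "max K 1" "Suc r"] by auto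
qed

end

section \<open>Decay of the block erasure probability\<close>

lemma half_pow_two_pow: "(1/2::real) ^ (2 ^ r) = exp (- ln 2 * 2 ^ r)"
proof -
  have "exp (- ln 2 * 2 ^ r) = exp (real (2 ^ r) * ln (1/2::real))" by (simp add: ln_div)
  also have "\<dots> = exp (ln (1/2::real)) ^ (2 ^ r)" by (rule exp_of_nat_mult)
  finally show ?thesis by simp
qed

lemma quadratic_recursion_squares:
  fixes m :: "nat \<Rightarrow> real"
  assumes m0: "\<And>t. 0 \<le> m t" and quad: "\<And>t. m (t + L) \<le> K * (m t)\<^sup>2"
    and K: "0 \<le> K" and t0: "K * m t0 \<le> 1/2"
  shows "K * m (t0 + r * L) \<le> (1/2) ^ (2 ^ r)"
proof (induction r)
  case 0 then show ?case using t0 by simp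
next
  case (Suc r)
  have "K * m (t0 + Suc r * L) \<le> K * (K * (m (t0 + r * L))\<^sup>2)"
    using quad[of "t0 + r * L"] K by (simp add: algebra_simps mult_left_mono)
  also have "\<dots> = (K * m (t0 + r * L))\<^sup>2" by (simp add: power2_eq_square)
  also have "\<dots> \<le> ((1/2) ^ (2 ^ r))\<^sup>2" using Suc m0 K by (intro power_mono) auto
  also have "\<dots> = (1/2) ^ (2 ^ Suc r)" by (simp add: power_mult[symmetric] mult.commute)
  finally show ?case .
qed

lemma quadratic_recursion_double_exp_decay:
  fixes m :: "nat \<Rightarrow> real" and K :: real and L :: nat
  assumes m0: "\<And>t. 0 \<le> m t" and mono: "\<And>t s. t \<le> s \<Longrightarrow> m s \<le> m t"
    and lim: "m \<longlonglongrightarrow> 0" and quad: "\<And>t. m (t + L) \<le> K * (m t)\<^sup>2"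
    and K1: "1 \<le> K" and L1: "1 \<le> L"
  obtains \<alpha> t0 where "\<alpha> > 0" "\<And>s. t0 \<le> s \<Longrightarrow> m s \<le> exp (- \<alpha> * 2 powr (real s / real L))"
proof -
  have "(\<lambda>t. K * m t) \<longlonglongrightarrow> K * 0" by (intro tendsto_mult tendsto_const lim)
  then have "\<forall>\<^sub>F t in sequentially. K * m t < 1/2" by (intro order_tendstoD) auto
  then obtain t0 where t0: "K * m t0 < 1/2" by (auto simp: eventually_sequentially)
  have "0 \<le> K" using K1 by simp
  note u = quadratic_recursion_squares[OF m0 quad this less_imp_le[OF t0]]
  define \<alpha> where "\<alpha> = ln 2 * 2 powr (- (real t0 / real L) - 1)"
  have "m s \<le> exp (- \<alpha> * 2 powr (real s / real L))" if s: "t0 \<le> s" for s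
  proof -
    define r where "r = (s - t0) div L"
    have rL: "r * L \<le> s - t0" by (simp add: r_def minus_mod_eq_div_mult[symmetric])
    have "s - t0 = r * L + (s - t0) mod L" by (simp add: r_def)
    moreover have "(s - t0) mod L < L" using L1 by simp
    ultimately have "s - t0 < (r + 1) * L" by (simp add: algebra_simps)
    then have "real (s - t0) < (real r + 1) * real L" by (metis of_nat_1 of_nat_add of_nat_less_iff of_nat_mult)
    then have "real (s - t0) / real L < real r + 1" using L1 by (simp add: divide_less_eq)
    then have "real s / real L - real t0 / real L - 1 \<le> real r"
      using s L1 by (simp add: of_nat_diff diff_divide_distrib)
    then have "\<alpha> * 2 powr (real s / real L) \<le> ln 2 * 2 ^ r"
      by (simp add: \<alpha>_def powr_add[symmetric] powr_realpow[symmetric] algebra_simps)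
    have "m s \<le> m (t0 + r * L)" using rL s by (intro mono) auto
    also have "\<dots> \<le> K * m (t0 + r * L)" using K1 m0[of "t0 + r * L"] by (simp add: mult_le_cancel_right1)
    also have "\<dots> \<le> exp (- ln 2 * 2 ^ r)" using u[of r] half_pow_two_pow by simp
    also have "\<dots> \<le> exp (- \<alpha> * 2 powr (real s / real L))"
      using \<open>\<alpha> * 2 powr (real s / real L) \<le> ln 2 * 2 ^ r\<close> by simp
    finally show ?thesis .
  qed
  moreover have "\<alpha> > 0" by (simp add: \<alpha>_def)
  ultimately show ?thesis using that by blast
qed

lemma block_erasure_prob_nonneg: "0 \<le> \<epsilon> \<Longrightarrow> \<epsilon> \<le> 1 \<Longrightarrow> 0 \<le> block_erasure_prob nV E T \<pi> \<epsilon> t"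
  unfolding block_erasure_prob_def by (intro sum_nonneg) simp

lemma block_erasure_prob_double_exp_decay:
  assumes proto: "protograph nV nC E" and deg: "\<forall>v<nV. vdeg E v \<ge> 2" and acyc: "deg2_acyclic E"
    and eps: "0 \<le> \<epsilon>" "\<epsilon> < de_threshold E" and nonempty: "E \<noteq> []"
  obtains \<alpha> L t0 where "\<alpha> > 0" "1 \<le> L"
    "\<And>T \<pi> t. valid_lift E T \<pi> \<Longrightarrow> enat (4 * t) < lift_girth E T \<pi> \<Longrightarrow> t0 \<le> t \<Longrightarrow>
       block_erasure_prob nV E T \<pi> \<epsilon> t \<le> real (T * nV) * exp (- \<alpha> * 2 powr (real t / real L))"
proof -
  have eps1: "\<epsilon> \<le> 1" and lim: "de_max E \<epsilon> \<longlonglongrightarrow> 0"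
    using de_max_tendsto_zero[OF nonempty eps] by auto
  obtain K L where K: "1 \<le> K" and L: "1 \<le> L" and quad: "\<And>t. de_max E \<epsilon> (t + L) \<le> K * (de_max E \<epsilon> t)\<^sup>2"
    using de_max_quadratic_decay[OF proto deg acyc eps(1) eps1 nonempty] by blast
  obtain \<alpha> t0 where \<alpha>: "\<alpha> > 0"
    and decay: "\<And>s. t0 \<le> s \<Longrightarrow> de_max E \<epsilon> s \<le> exp (- \<alpha> * 2 powr (real s / real L))"
    using quadratic_recursion_double_exp_decay[OF de_max_nonneg[OF nonempty eps(1) eps1]
        de_max_antimono[OF nonempty eps(1) eps1] lim quad K L] by blast
  have "block_erasure_prob nV E T \<pi> \<epsilon> t \<le> real (T * nV) * exp (- \<alpha> * 2 powr (real t / real L))"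
    if "valid_lift E T \<pi>" "enat (4 * t) < lift_girth E T \<pi>" "t0 \<le> t" for T \<pi> t
  proof -
    have "block_erasure_prob nV E T \<pi> \<epsilon> t \<le> real (T * nV) * de_max E \<epsilon> t"
      unfolding de_max_def using proto deg eps(1) eps1 that(1,2)
      by (intro block_erasure_prob_le) auto
    also have "\<dots> \<le> real (T * nV) * exp (- \<alpha> * 2 powr (real t / real L))"
      using decay[OF that(3)] by (intro mult_left_mono) auto
    finally show ?thesis .
  qed
  then show ?thesis using that \<alpha> L by blast
qed

lemma eventually_double_exp_le_stretched_exp:
  fixes P :: "nat \<Rightarrow> real" and N t :: "nat \<Rightarrow> nat" and L t0 :: nat
  assumes N: "filterlim N at_top sequentially" and c': "c' > 0"
    and t: "\<And>n. c' * ln (real (N n)) \<le> real (t n)" and \<alpha>: "0 \<le> \<alpha>" and L: "1 \<le> L"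
    and decay: "\<And>n. t0 \<le> t n \<Longrightarrow> P n \<le> real (N n) * exp (- \<alpha> * 2 powr (real (t n) / real L))"
  shows "\<forall>\<^sub>F n in sequentially. P n \<le> real (N n) * exp (- \<alpha> * real (N n) powr (c' * ln 2 / real L))"
proof -
  have "\<forall>\<^sub>F n in sequentially. 1 \<le> N n" using N by (simp add: filterlim_at_top)
  moreover have "\<forall>\<^sub>F n in sequentially. real t0 \<le> c' * ln (real (N n))"
    using filterlim_tendsto_pos_mult_at_top[OF tendsto_const c'
        filterlim_compose[OF ln_at_top filterlim_compose[OF filterlim_real_sequentially N]]]
    by (simp add: filterlim_at_top)
  ultimately show ?thesis
  proof eventually_elim
    case (elim n)
    have N_pos: "0 < real (N n)" using elim(1) by simp
    have "real t0 \<le> real (t n)" using elim(2) t[of n] by linarith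
    then have "P n \<le> real (N n) * exp (- \<alpha> * 2 powr (real (t n) / real L))" by (intro decay) simp
    have "real (N n) powr (c' * ln 2 / real L) = 2 powr (c' * ln (real (N n)) / real L)"
      using N_pos by (simp add: powr_def)
    also have "\<dots> \<le> 2 powr (real (t n) / real L)"
      using t[of n] L by (intro powr_mono divide_right_mono) auto
    finally have "exp (- \<alpha> * 2 powr (real (t n) / real L)) \<le>
                  exp (- \<alpha> * real (N n) powr (c' * ln 2 / real L))"
      using \<alpha> by (simp add: mult_left_mono)
    then have "real (N n) * exp (- \<alpha> * 2 powr (real (t n) / real L)) \<le>
               real (N n) * exp (- \<alpha> * real (N n) powr (c' * ln 2 / real L))"
      using N_pos by (simp add: mult_left_mono)
    then show ?case using \<open>P n \<le> real (N n) * exp (- \<alpha> * 2 powr (real (t n) / real L))\<close> by linarith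
  qed
qed

lemma stretched_exp_bound_asymptotics:
  fixes P :: "nat \<Rightarrow> real" and N :: "nat \<Rightarrow> nat"
  assumes N: "filterlim N at_top sequentially" and P: "\<And>n. 0 \<le> P n"
    and \<alpha>: "\<alpha> > 0" and \<gamma>: "\<gamma> > 0"
    and bound: "\<forall>\<^sub>F n in sequentially. P n \<le> real (N n) * exp (- \<alpha> * real (N n) powr \<gamma>)"
  shows "P \<in> O(\<lambda>n. real (N n) * exp (- \<alpha> * real (N n) powr \<gamma>))"
    and "\<And>k. k > 0 \<Longrightarrow> (\<lambda>n. real (N n) powr k * P n) \<longlonglongrightarrow> 0"
proof -
  have "\<forall>\<^sub>F n in sequentially. norm (P n) \<le> 1 * norm (real (N n) * exp (- \<alpha> * real (N n) powr \<gamma>))"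
    using bound by eventually_elim (use P in simp)
  then show "P \<in> O(\<lambda>n. real (N n) * exp (- \<alpha> * real (N n) powr \<gamma>))" by (rule bigoI)
  have rN: "filterlim (\<lambda>n. real (N n)) at_top sequentially"
    by (rule filterlim_compose[OF filterlim_real_sequentially N])
  fix k :: real assume "k > 0"
  have "((\<lambda>x::real. x powr k * (x * exp (- \<alpha> * x powr \<gamma>))) \<longlongrightarrow> 0) at_top"
    using \<alpha> \<gamma> \<open>k > 0\<close> by real_asymp
  then have lim: "(\<lambda>n. real (N n) powr k * (real (N n) * exp (- \<alpha> * real (N n) powr \<gamma>))) \<longlonglongrightarrow> 0"
    by (rule filterlim_compose[OF _ rN])
  show "(\<lambda>n. real (N n) powr k * P n) \<longlonglongrightarrow> 0"
  proof (rule tendsto_sandwich[OF _ _ tendsto_const lim])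
    show "\<forall>\<^sub>F n in sequentially. 0 \<le> real (N n) powr k * P n" using P by simp
    show "\<forall>\<^sub>F n in sequentially.
        real (N n) powr k * P n \<le> real (N n) powr k * (real (N n) * exp (- \<alpha> * real (N n) powr \<gamma>))"
      using bound by eventually_elim (simp add: mult_left_mono)
  qed
qed

theorem mainTheorem8:
  fixes nV nC :: nat and E :: "(nat \<times> nat) list" and \<epsilon> c c' :: real
    and T :: "nat \<Rightarrow> nat" and \<Pi> :: "nat \<Rightarrow> nat \<Rightarrow> nat \<Rightarrow> nat" and t :: "nat \<Rightarrow> nat"
    and N :: "nat \<Rightarrow> nat"
  assumes proto: "protograph nV nC E"
    and deg_ge2: "\<forall>v<nV. vdeg E v \<ge> 2"
    and G2_acyclic: "deg2_acyclic E"
    and deg2_path: "\<forall>v<nV. vdeg E v = 2 \<longrightarrow>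
          (\<exists>w<nV. vdeg E w \<ge> 3 \<and> (Inl v, Inl w) \<in> (proto_adj E)\<^sup>*)"
    and eps: "0 \<le> \<epsilon>" "\<epsilon> < de_threshold E"
    and lifts: "\<forall>n. valid_lift E (T n) (\<Pi> n)"
    and N_def: "\<forall>n. N n = T n * nV"
    and N_lim: "filterlim N at_top sequentially"
    and c_pos: "c > 0"
    and girth_log: "\<forall>n. ereal (c * ln (real (N n))) \<le> ereal_of_enat (lift_girth E (T n) (\<Pi> n))"
    and t_girth: "\<forall>n. enat (4 * t n) < lift_girth E (T n) (\<Pi> n)"
    and c'_pos: "c' > 0"
    and t_log: "\<forall>n. c' * ln (real (N n)) \<le> real (t n)"
  shows "\<exists>\<beta>>0. \<exists>\<gamma>>0.
           (\<lambda>n. block_erasure_prob nV E (T n) (\<Pi> n) \<epsilon> (t n))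
             \<in> O(\<lambda>n. real (N n) * exp (- \<beta> * real (N n) powr \<gamma>))
         \<and> (\<forall>k>0. (\<lambda>n. real (N n) powr k * block_erasure_prob nV E (T n) (\<Pi> n) \<epsilon> (t n))
                   \<longlonglongrightarrow> 0)"
proof -
  have "nV \<noteq> 0"
  proof
    assume "nV = 0"
    moreover have "\<forall>\<^sub>F n in sequentially. 1 \<le> N n" using N_lim by (simp add: filterlim_at_top)
    ultimately show False using N_def by simp
  qed
  then have "E \<noteq> []" using deg_ge2 by (auto simp: vdeg_def)
  obtain \<alpha> L t0 where \<alpha>: "\<alpha> > 0" and L: "1 \<le> L" and decay: "\<And>T \<pi> t. valid_lift E T \<pi> \<Longrightarrow>
      enat (4 * t) < lift_girth E T \<pi> \<Longrightarrow> t0 \<le> t \<Longrightarrow>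
      block_erasure_prob nV E T \<pi> \<epsilon> t \<le> real (T * nV) * exp (- \<alpha> * 2 powr (real t / real L))"
    using block_erasure_prob_double_exp_decay[OF proto deg_ge2 G2_acyclic eps \<open>E \<noteq> []\<close>] by blast
  let ?P = "\<lambda>n. block_erasure_prob nV E (T n) (\<Pi> n) \<epsilon> (t n)" and ?\<gamma> = "c' * ln 2 / real L"
  have "?P n \<le> real (N n) * exp (- \<alpha> * 2 powr (real (t n) / real L))" if "t0 \<le> t n" for n
    using decay[OF lifts[rule_format] t_girth[rule_format] that] N_def by simp
  then have bound: "\<forall>\<^sub>F n in sequentially. ?P n \<le> real (N n) * exp (- \<alpha> * real (N n) powr ?\<gamma>)"
    by (rule eventually_double_exp_le_stretched_exp[OF N_lim c'_pos t_log[rule_format] less_imp_le[OF \<alpha>] L])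
  have P: "0 \<le> ?P n" for n
    using block_erasure_prob_nonneg[OF eps(1) de_max_tendsto_zero(1)[OF \<open>E \<noteq> []\<close> eps]] .
  have \<gamma>: "?\<gamma> > 0" using c'_pos L by simp
  show ?thesis using stretched_exp_bound_asymptotics[OF N_lim P \<alpha> \<gamma> bound] \<alpha> \<gamma> by blast
qed

end
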